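(* Let $d\ge1$, $U=U(S_{\rm lazy},\mathcal{P}_{\rm lazy},G_{2d+1})$ and $\Pi_+$ the orthogonal projection onto its eigenspace for eigenvalue $1$. For $z=(z_1,\dots,z_d)\in T^d$ with all $z_j\neq-1$ put $$w_o(z)=\frac1{D(z)}\Big(\tfrac12\mathbf{e}_{d+1}+\sum_{j=1}^d\frac1{1+z_j}\big(z_j\mathbf{e}_j+\mathbf{e}_{d+1+j}\big)\Big),\qquad D(z)=\Big(\tfrac14+2\sum_{j=1}^d\frac1{|1+z_j|^2}\Big)^{1/2}.$$ Then for every $\phi\in\mathbb{C}^{2d+1}$ and $x\in\mathbb{Z}^d$, $$\Pi_+(\delta_0\otimes\phi)(x)=\int_{T^d}z^{-x}\langle\phi,w_o(z)\rangle_{\mathbb{C}^{2d+1}}\,w_o(z)\,d\nu(z).$$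
   Context: $T^d=\{z\in\mathbb{C}^d:|z_j|=1\}$ with normalized Haar (Lebesgue) measure $\nu$; $z^x=z_1^{x_1}\cdots z_d^{x_d}$. Inner products are linear in the first argument. $u_1,\dots,u_d$ standard basis of $\mathbb{Z}^d$, $\mathbf{e}_1,\dots,\mathbf{e}_{2d+1}$ standard basis of $\mathbb{C}^{2d+1}$, $P_j$ orthogonal projection onto $\mathbb{C}\mathbf{e}_j$. $S_{\rm lazy}=\{0,\pm u_1,\dots,\pm u_d\}$, $\mathcal{P}_{\rm lazy}$: $P_{u_j}=P_j$, $P_0=P_{d+1}$, $P_{-u_j}=P_{d+1+j}$. $(\tau^\alpha f)(x)=f(x-\alpha)$; $U(S_{\rm lazy},\mathcal{P}_{\rm lazy},C)=\big(\sum_{\alpha}\tau^\alpha P_\alpha\big)C$ with $C$ acting pointwise. $G_D=\frac2DJ-I$, $J$ the all-ones matrix. $\delta_0\otimes\phi$ equals $\phi$ at $0$ and $0$ elsewhere. *)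

theory Defs
  imports "HOL-Probability.Probability"
begin

definition Zd :: "nat \<Rightarrow> (nat \<Rightarrow> int) set" where
  "Zd d = {x. \<forall>j. j \<notin> {1..d} \<longrightarrow> x j = 0}"

definition unitv :: "nat \<Rightarrow> nat \<Rightarrow> int" where
  "unitv j = (\<lambda>i. if i = j then 1 else 0)"

definition shift_lazy :: "nat \<Rightarrow> nat \<Rightarrow> nat \<Rightarrow> int" where
  "shift_lazy d k =
     (if k \<in> {1..d} then unitv k
      else if k \<in> {d+2..2*d+1} then (\<lambda>i. - unitv (k - (d+1)) i)
      else (\<lambda>_. 0))"

definition grover :: "nat \<Rightarrow> (nat \<Rightarrow> complex) \<Rightarrow> nat \<Rightarrow> complex" where
  "grover D v k = (if k \<in> {1..D} then (2 / of_nat D) * (\<Sum>l=1..D. v l) - v k else 0)"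

text \<open>U = (sum_alpha tau^alpha P_alpha) C, with (tau^alpha f)(x) = f(x - alpha).\<close>
definition U_lazy :: "nat \<Rightarrow> ((nat \<Rightarrow> int) \<Rightarrow> nat \<Rightarrow> complex) \<Rightarrow> (nat \<Rightarrow> int) \<Rightarrow> nat \<Rightarrow> complex" where
  "U_lazy d \<psi> = (\<lambda>x k. grover (2*d+1) (\<psi> (\<lambda>i. x i - shift_lazy d k i)) k)"

definition l2space :: "nat \<Rightarrow> ((nat \<Rightarrow> int) \<Rightarrow> nat \<Rightarrow> complex) set" where
  "l2space d = {\<psi>. (\<forall>x. x \<notin> Zd d \<longrightarrow> \<psi> x = (\<lambda>_. 0))
                 \<and> (\<forall>x k. k \<notin> {1..2*d+1} \<longrightarrow> \<psi> x k = 0)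
                 \<and> (\<lambda>x. \<Sum>k=1..2*d+1. (cmod (\<psi> x k))^2) summable_on Zd d}"

definition l2inner :: "nat \<Rightarrow> ((nat \<Rightarrow> int) \<Rightarrow> nat \<Rightarrow> complex) \<Rightarrow> ((nat \<Rightarrow> int) \<Rightarrow> nat \<Rightarrow> complex) \<Rightarrow> complex" where
  "l2inner d \<psi> \<phi> = (\<Sum>\<^sub>\<infinity>x\<in>Zd d. \<Sum>k=1..2*d+1. \<psi> x k * cnj (\<phi> x k))"

definition eigenspace1 :: "nat \<Rightarrow> ((nat \<Rightarrow> int) \<Rightarrow> nat \<Rightarrow> complex) set" where
  "eigenspace1 d = {\<psi> \<in> l2space d. U_lazy d \<psi> = \<psi>}"

definition proj_plus :: "nat \<Rightarrow> ((nat \<Rightarrow> int) \<Rightarrow> nat \<Rightarrow> complex) \<Rightarrow> (nat \<Rightarrow> int) \<Rightarrow> nat \<Rightarrow> complex" where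
  "proj_plus d \<psi> = (THE p. p \<in> eigenspace1 d \<and>
      (\<forall>e\<in>eigenspace1 d. l2inner d (\<lambda>x k. \<psi> x k - p x k) e = 0))"

definition delta0 :: "(nat \<Rightarrow> complex) \<Rightarrow> (nat \<Rightarrow> int) \<Rightarrow> nat \<Rightarrow> complex" where
  "delta0 \<phi> = (\<lambda>x k. if x = (\<lambda>_. 0) then \<phi> k else 0)"

definition cinner_fin :: "nat \<Rightarrow> (nat \<Rightarrow> complex) \<Rightarrow> (nat \<Rightarrow> complex) \<Rightarrow> complex" where
  "cinner_fin D \<phi> w = (\<Sum>k=1..D. \<phi> k * cnj (w k))"

definition Dz :: "nat \<Rightarrow> (nat \<Rightarrow> complex) \<Rightarrow> real" where
  "Dz d z = sqrt (1/4 + 2 * (\<Sum>j=1..d. 1 / (cmod (1 + z j))^2))"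

text \<open>w_o(z), defined as 0 on the null set where some z_j = -1.\<close>
definition wo :: "nat \<Rightarrow> (nat \<Rightarrow> complex) \<Rightarrow> nat \<Rightarrow> complex" where
  "wo d z = (\<lambda>k. if (\<exists>j\<in>{1..d}. z j = -1) then 0 else
      (1 / complex_of_real (Dz d z)) *
      (if k = d+1 then 1/2
       else if k \<in> {1..d} then z k / (1 + z k)
       else if k \<in> {d+2..2*d+1} then 1 / (1 + z (k - (d+1)))
       else 0))"

definition haar :: "nat \<Rightarrow> (nat \<Rightarrow> complex) measure" where
  "haar d = distr (Pi\<^sub>M {1..d} (\<lambda>_. uniform_measure lborel {0..2*pi}))
                  (Pi\<^sub>M {1..d} (\<lambda>_. borel))
                  (\<lambda>\<theta>. restrict (\<lambda>j. cis (\<theta> j)) {1..d})"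

definition zpow :: "nat \<Rightarrow> (nat \<Rightarrow> complex) \<Rightarrow> (nat \<Rightarrow> int) \<Rightarrow> complex" where
  "zpow d z x = (\<Prod>j=1..d. z j powi (x j))"

end

theory Submission
  imports Defs
begin

text \<open>Fourier transform turns \<open>U\<close> into multiplication by the unitary symbol
  \<open>S(z) = diag(z\<^sup>\<alpha>) G\<close>, and \<open>w\<^sub>o(z)\<close> is a unit fixed vector of \<open>S(z)\<close>. Hence the
  Fourier coefficients \<open>p\<close> of \<open>z \<mapsto> \<langle>\<phi>, w\<^sub>o(z)\<rangle> w\<^sub>o(z)\<close> satisfy \<open>U p = p\<close>, and it
  remains to see that \<open>\<delta>\<^sub>0 \<otimes> \<phi> - p\<close>, the Fourier coefficients of
  \<open>y(z) = \<phi> - \<langle>\<phi>, w\<^sub>o(z)\<rangle> w\<^sub>o(z)\<close>, is orthogonal to every \<open>e\<close> with \<open>U e = e\<close>.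
  Since \<open>y(z) \<perp> w\<^sub>o(z)\<close>, on the set where all \<open>|1 + z\<^sub>j| \<ge> \<delta>\<close> one can write
  \<open>y = S\<^sup>* r - r\<close> with a bounded \<open>r\<close>, and \<open>\<langle>U\<^sup>* R - R, e\<rangle> = \<langle>R, U e - e\<rangle> = 0\<close>.
  The rest of \<open>y\<close> lives on a set whose measure tends to \<open>0\<close> with \<open>\<delta>\<close>, so by Bessel's
  inequality its coefficients have vanishing norm.\<close>

section \<open>Fourier analysis on the torus\<close>

definition circle_measure :: "real measure" where
  "circle_measure = uniform_measure lborel {0..2*pi}"

lemma prob_space_circle_measure: "prob_space circle_measure"
  unfolding circle_measure_def by (rule prob_space_uniform_measure) auto

lemma sets_circle_measure[simp, measurable_cong]: "sets circle_measure = sets borel"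
  unfolding circle_measure_def by simp

lemma borel_measurable_cis[measurable]: "cis \<in> borel_measurable borel"
  by (intro borel_measurable_continuous_onI continuous_intros)

lemma borel_measurable_cnj[measurable (raw)]:
  "f \<in> borel_measurable M \<Longrightarrow> (\<lambda>x. cnj (f x)) \<in> borel_measurable M"
  using borel_measurable_continuous_onI[OF continuous_on_cnj[OF continuous_on_id]]
  by (rule measurable_compose[rotated])

lemma integral_uniform_measure_interval:
  fixes f :: "real \<Rightarrow> complex"
  assumes "a < b" and [measurable]: "f \<in> borel_measurable borel"
  shows "integral\<^sup>L (uniform_measure lborel {a..b}) f = (LBINT t=a..b. f t) / (b - a)"
proof -
  have "uniform_measure lborel {a..b} = density lborel (\<lambda>t. ennreal (indicator {a..b} t / (b - a)))"
    unfolding uniform_measure_def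
  proof (rule density_cong)
    show "AE t in lborel. indicator {a..b} t / emeasure lborel {a..b} =
        ennreal (indicator {a..b} t / (b - a))"
    proof (intro AE_I2)
      fix t :: real
      have "1 / ennreal (b - a) = ennreal (1 / (b - a))"
        using assms(1) by (subst divide_ennreal[symmetric]) auto
      then show "indicator {a..b} t / emeasure lborel {a..b} = ennreal (indicator {a..b} t / (b - a))"
        using assms(1) by (simp add: indicator_def)
    qed
  qed simp_all
  then have "integral\<^sup>L (uniform_measure lborel {a..b}) f =
      (LINT t|lborel. (1 / (b - a)) *\<^sub>R (indicator {a..b} t *\<^sub>R f t))"
    using assms(1) by (simp add: integral_density)
  also have "\<dots> = (LBINT t=a..b. f t) / (b - a)"
    using assms(1) by (simp add: interval_integral_Icc set_lebesgue_integral_def scaleR_conv_of_real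
        field_simps)
  finally show ?thesis .
qed

lemma has_vector_derivative_cis_mult:
  "((\<lambda>t. cis (n * t)) has_vector_derivative (\<i> * of_real n * cis (n * t))) (at t within S)"
proof -
  have "((\<lambda>t. n * t) has_derivative (\<lambda>h. n * h)) (at t within S)"
    by (auto intro!: derivative_eq_intros)
  from has_derivative_cis[OF this] show ?thesis
    unfolding has_vector_derivative_def by (simp add: scaleR_conv_of_real mult_ac)
qed

lemma integral_circle_measure_cis:
  "integral\<^sup>L circle_measure (\<lambda>t. cis (of_int n * t)) = (if n = 0 then 1 else 0)"
proof (cases "n = 0")
  case True
  interpret prob_space circle_measure by (rule prob_space_circle_measure)
  show ?thesis using True by (simp add: prob_space)
next
  case False
  let ?F = "\<lambda>t. cis (of_int n * t) / (\<i> * of_int n)"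
  have "(LBINT t=ereal 0..ereal (2*pi). cis (of_int n * t)) = ?F (2*pi) - ?F 0"
  proof (rule interval_integral_FTC_finite)
    fix t :: real
    show "(?F has_vector_derivative cis (of_int n * t)) (at t within {min 0 (2*pi)..max 0 (2*pi)})"
    proof -
      have "(?F has_vector_derivative (\<i> * of_real (of_int n) * cis (of_int n * t)) / (\<i> * of_int n))
          (at t within {min 0 (2*pi)..max 0 (2*pi)})"
        by (rule has_vector_derivative_divide[OF has_vector_derivative_cis_mult])
      then show ?thesis using False by simp
    qed
  qed (intro continuous_intros)
  also have "cis (of_int n * (2*pi)) = 1"
    by (metis cis_multiple_2pi mult.commute of_int_of_nat_eq Ints_of_int)
  finally show ?thesis
    using False unfolding circle_measure_def
    by (subst integral_uniform_measure_interval) (auto simp: zero_ereal_def)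
qed

text \<open>Functions on \<open>T\<^sup>d\<close> are written in angle coordinates \<open>\<theta> \<in> [0, 2\<pi>]\<^sup>d\<close>, with
  \<open>z\<^sub>j = cis \<theta>\<^sub>j\<close>; \<open>haar d\<close> is the image of \<open>torus_measure d\<close> under \<open>torus_point d\<close>.\<close>

definition torus_measure :: "nat \<Rightarrow> (nat \<Rightarrow> real) measure" where
  "torus_measure d = PiM {1..d} (\<lambda>_. circle_measure)"

definition torus_point :: "nat \<Rightarrow> (nat \<Rightarrow> real) \<Rightarrow> nat \<Rightarrow> complex" where
  "torus_point d \<theta> = (\<lambda>j\<in>{1..d}. cis (\<theta> j))"

definition character :: "nat \<Rightarrow> (nat \<Rightarrow> int) \<Rightarrow> (nat \<Rightarrow> real) \<Rightarrow> complex" where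
  "character d x \<theta> = cis (\<Sum>j=1..d. of_int (x j) * \<theta> j)"

lemma prob_space_torus_measure: "prob_space (torus_measure d)"
  unfolding torus_measure_def by (rule prob_space_PiM) (rule prob_space_circle_measure)

lemma integrable_torus_measure_bounded:
  fixes f :: "(nat \<Rightarrow> real) \<Rightarrow> 'b::{banach,second_countable_topology}"
  assumes "f \<in> borel_measurable (torus_measure d)" "\<And>\<theta>. norm (f \<theta>) \<le> B"
  shows "integrable (torus_measure d) f"
proof -
  interpret prob_space "torus_measure d" by (rule prob_space_torus_measure)
  show ?thesis by (rule integrable_const_bound[where B=B]) (use assms in auto)
qed

lemma borel_measurable_torus_component[measurable]:
  "(\<lambda>\<theta>. \<theta> j) \<in> borel_measurable (torus_measure d)"
proof (cases "j \<in> {1..d}")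
  case True
  have "(\<lambda>\<theta>. \<theta> j) \<in> measurable (torus_measure d) circle_measure"
    unfolding torus_measure_def by (rule measurable_component_singleton[OF True])
  then show ?thesis by (simp add: measurable_cong_sets[OF refl sets_circle_measure])
next
  case False
  have "(\<lambda>\<theta>. \<theta> j) \<in> borel_measurable (torus_measure d) \<longleftrightarrow>
      (\<lambda>\<theta>. undefined :: real) \<in> borel_measurable (torus_measure d)"
    by (rule measurable_cong)
      (use False in \<open>auto simp: torus_measure_def space_PiM PiE_def extensional_def\<close>)
  then show ?thesis by simp
qed

lemma haar_eq_distr_torus_point:
  "haar d = distr (torus_measure d) (PiM {1..d} (\<lambda>_. borel)) (torus_point d)"
  unfolding haar_def torus_measure_def torus_point_def circle_measure_def restrict_def by simp

lemma borel_measurable_PiM_component[measurable]: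
  "(\<lambda>z::nat\<Rightarrow>complex. z j) \<in> borel_measurable (PiM {1..d} (\<lambda>_. borel))"
proof (cases "j \<in> {1..d}")
  case False
  have "(\<lambda>z::nat\<Rightarrow>complex. z j) \<in> borel_measurable (PiM {1..d} (\<lambda>_. borel)) \<longleftrightarrow>
      (\<lambda>z::nat\<Rightarrow>complex. undefined :: complex) \<in> borel_measurable (PiM {1..d} (\<lambda>_. borel))"
    by (rule measurable_cong) (use False in \<open>auto simp: space_PiM PiE_def extensional_def\<close>)
  then show ?thesis by simp
qed (rule measurable_component_singleton)

lemma integral_haar:
  fixes f :: "(nat \<Rightarrow> complex) \<Rightarrow> complex"
  assumes "f \<in> borel_measurable (PiM {1..d} (\<lambda>_. borel))"
  shows "integral\<^sup>L (haar d) f = integral\<^sup>L (torus_measure d) (\<lambda>\<theta>. f (torus_point d \<theta>))"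
proof -
  have "torus_point d \<in> measurable (torus_measure d) (PiM {1..d} (\<lambda>_. borel))"
    unfolding torus_point_def by (rule measurable_restrict) measurable
  then show ?thesis unfolding haar_eq_distr_torus_point using assms by (rule integral_distr)
qed

lemma borel_measurable_character[measurable]: "character d x \<in> borel_measurable (torus_measure d)"
  unfolding character_def by measurable

lemma cis_sum: "cis (\<Sum>i\<in>A. f i) = (\<Prod>i\<in>A. cis (f i))"
  by (induction A rule: infinite_finite_induct) (auto simp: cis_mult[symmetric])

lemma zpow_torus_point: "zpow d (torus_point d \<theta>) x = character d x \<theta>"
  unfolding zpow_def torus_point_def character_def cis_sum by (simp add: cis_power_int)

lemma character_mult: "character d x \<theta> * character d y \<theta> = character d (\<lambda>j. x j + y j) \<theta>"
  unfolding character_def cis_mult by (simp add: sum.distrib[symmetric] algebra_simps)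

lemma cnj_character: "cnj (character d x \<theta>) = character d (\<lambda>j. - x j) \<theta>"
  unfolding character_def by (simp add: sum_negf cis_cnj)

lemma norm_character[simp]: "cmod (character d x \<theta>) = 1"
  unfolding character_def by simp

lemma Zd_add: "x \<in> Zd d \<Longrightarrow> y \<in> Zd d \<Longrightarrow> (\<lambda>j. x j + y j) \<in> Zd d"
  and Zd_diff: "x \<in> Zd d \<Longrightarrow> y \<in> Zd d \<Longrightarrow> (\<lambda>j. x j - y j) \<in> Zd d"
  and Zd_uminus: "x \<in> Zd d \<Longrightarrow> (\<lambda>j. - x j) \<in> Zd d"
  unfolding Zd_def by auto

lemma integral_character:
  assumes "x \<in> Zd d"
  shows "integral\<^sup>L (torus_measure d) (character d x) = (if x = (\<lambda>_. 0) then 1 else 0)"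
proof -
  interpret product_sigma_finite "\<lambda>_::nat. circle_measure"
    by (simp add: product_sigma_finite_def prob_space_imp_sigma_finite prob_space_circle_measure)
  interpret circle: prob_space circle_measure by (rule prob_space_circle_measure)
  have "integral\<^sup>L (torus_measure d) (character d x) =
      integral\<^sup>L (torus_measure d) (\<lambda>\<theta>. \<Prod>j\<in>{1..d}. cis (of_int (x j) * \<theta> j))"
    unfolding character_def by (simp add: cis_sum)
  also have "\<dots> = (\<Prod>j\<in>{1..d}. integral\<^sup>L circle_measure (\<lambda>t. cis (of_int (x j) * t)))"
    unfolding torus_measure_def
    by (rule product_integral_prod)
      (auto intro!: circle.integrable_const_bound[where B=1]
        simp: measurable_cong_sets[OF sets_circle_measure refl])
  also have "\<dots> = (\<Prod>j\<in>{1..d}. if x j = 0 then 1 else 0)"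
    by (simp add: integral_circle_measure_cis)
  also have "\<dots> = (if x = (\<lambda>_. 0) then 1 else 0)"
    using assms unfolding Zd_def by (auto simp: fun_eq_iff) (metis atLeastAtMost_iff One_nat_def)
  finally show ?thesis .
qed

lemma integral_character_mult_cnj:
  assumes "x \<in> Zd d" "y \<in> Zd d"
  shows "integral\<^sup>L (torus_measure d) (\<lambda>\<theta>. character d x \<theta> * cnj (character d y \<theta>)) =
    (if x = y then 1 else 0)"
proof -
  have "(\<lambda>j. x j - y j) = (\<lambda>_. 0) \<longleftrightarrow> x = y"
    by (auto simp: fun_eq_iff)
  then show ?thesis
    using integral_character[OF Zd_diff[OF assms]] by (simp add: cnj_character character_mult)
qed

definition trig_poly :: "nat \<Rightarrow> (nat \<Rightarrow> int) set \<Rightarrow> ((nat \<Rightarrow> int) \<Rightarrow> complex) \<Rightarrow> (nat \<Rightarrow> real) \<Rightarrow> complex" where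
  "trig_poly d S c \<theta> = (\<Sum>x\<in>S. c x * character d x \<theta>)"

lemma borel_measurable_trig_poly[measurable]: "trig_poly d S c \<in> borel_measurable (torus_measure d)"
  unfolding trig_poly_def by measurable

lemma norm_trig_poly_le: "cmod (trig_poly d S c \<theta>) \<le> (\<Sum>x\<in>S. cmod (c x))"
  unfolding trig_poly_def by (rule order_trans[OF norm_sum]) (simp add: norm_mult)

lemma integral_mult_cnj_trig_poly:
  assumes g: "g \<in> borel_measurable (torus_measure d)" "\<And>\<theta>. cmod (g \<theta>) \<le> B"
  shows "integral\<^sup>L (torus_measure d) (\<lambda>\<theta>. g \<theta> * cnj (trig_poly d S c \<theta>)) =
    (\<Sum>x\<in>S. cnj (c x) * integral\<^sup>L (torus_measure d) (\<lambda>\<theta>. character d (\<lambda>j. - x j) \<theta> * g \<theta>))"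
proof -
  have "integrable (torus_measure d) (\<lambda>\<theta>. character d (\<lambda>j. - x j) \<theta> * g \<theta>)" for x
    by (rule integrable_torus_measure_bounded[where B=B]) (use g in \<open>auto simp: norm_mult\<close>)
  moreover have "(\<lambda>\<theta>. g \<theta> * cnj (trig_poly d S c \<theta>)) =
      (\<lambda>\<theta>. \<Sum>x\<in>S. cnj (c x) * (character d (\<lambda>j. - x j) \<theta> * g \<theta>))"
    by (auto simp: trig_poly_def sum_distrib_left cnj_character mult_ac)
  ultimately show ?thesis by simp
qed

lemma integral_norm_sq_trig_poly:
  assumes "finite S" "S \<subseteq> Zd d"
  shows "integral\<^sup>L (torus_measure d) (\<lambda>\<theta>. (cmod (trig_poly d S c \<theta>))\<^sup>2) = (\<Sum>x\<in>S. (cmod (c x))\<^sup>2)"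
proof -
  have "(\<lambda>\<theta>. complex_of_real ((cmod (trig_poly d S c \<theta>))\<^sup>2)) =
      (\<lambda>\<theta>. \<Sum>y\<in>S. \<Sum>x\<in>S. (c x * cnj (c y)) * (character d x \<theta> * cnj (character d y \<theta>)))"
    unfolding complex_norm_square
    by (auto simp: trig_poly_def sum_distrib_left sum_distrib_right mult_ac)
  then have "complex_of_real (integral\<^sup>L (torus_measure d) (\<lambda>\<theta>. (cmod (trig_poly d S c \<theta>))\<^sup>2)) =
      (\<Sum>y\<in>S. \<Sum>x\<in>S. (c x * cnj (c y)) *
        integral\<^sup>L (torus_measure d) (\<lambda>\<theta>. character d x \<theta> * cnj (character d y \<theta>)))"
    by (simp add: integral_complex_of_real[symmetric] integrable_torus_measure_bounded[where B=1]
        norm_mult)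
  also have "\<dots> = (\<Sum>y\<in>S. \<Sum>x\<in>S. (c x * cnj (c y)) * (if x = y then 1 else 0))"
    using assms by (intro sum.cong refl) (simp add: integral_character_mult_cnj subsetD)
  also have "\<dots> = (\<Sum>x\<in>S. c x * cnj (c x))"
    using assms by (simp add: if_distrib cong: if_cong)
  also have "\<dots> = complex_of_real (\<Sum>x\<in>S. (cmod (c x))\<^sup>2)"
    by (simp only: of_real_sum complex_norm_square)
  finally show ?thesis by (simp only: of_real_eq_iff)
qed

text \<open>The trigonometric polynomial \<open>s\<close> with the Fourier coefficients of \<open>g\<close> satisfies
  \<open>\<integral>|g - s|\<^sup>2 = \<integral>|g|\<^sup>2 - \<Sum>|c\<^sub>x|\<^sup>2\<close>.\<close>
lemma bessel_inequality_character:
  fixes g :: "(nat \<Rightarrow> real) \<Rightarrow> complex"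
  assumes g: "g \<in> borel_measurable (torus_measure d)" "\<And>\<theta>. cmod (g \<theta>) \<le> B"
    and S: "finite S" "S \<subseteq> Zd d"
  shows "(\<Sum>x\<in>S. (cmod (integral\<^sup>L (torus_measure d) (\<lambda>\<theta>. character d (\<lambda>j. - x j) \<theta> * g \<theta>)))\<^sup>2)
         \<le> integral\<^sup>L (torus_measure d) (\<lambda>\<theta>. (cmod (g \<theta>))\<^sup>2)"
proof -
  define c where "c x = integral\<^sup>L (torus_measure d) (\<lambda>\<theta>. character d (\<lambda>j. - x j) \<theta> * g \<theta>)" for x
  define s where "s = trig_poly d S c"
  define r where "r \<theta> = Re (g \<theta> * cnj (s \<theta>))" for \<theta>
  define C where "C = (\<Sum>x\<in>S. cmod (c x))"
  have [measurable]: "g \<in> borel_measurable (torus_measure d)" "s \<in> borel_measurable (torus_measure d)"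
    unfolding s_def by (rule g(1), measurable)
  have s_le: "cmod (s \<theta>) \<le> C" for \<theta>
    unfolding s_def C_def by (rule norm_trig_poly_le)
  have B: "0 \<le> B" using g(2)[of undefined] by (meson norm_ge_zero order_trans)
  have gs: "integrable (torus_measure d) (\<lambda>\<theta>. g \<theta> * cnj (s \<theta>))"
    by (rule integrable_torus_measure_bounded[where B="B * C"])
      (use g(2) s_le B in \<open>auto simp: norm_mult mult_mono\<close>)
  have int_g: "integrable (torus_measure d) (\<lambda>\<theta>. (cmod (g \<theta>))\<^sup>2)"
    using g(2) by (intro integrable_torus_measure_bounded[where B="B\<^sup>2"]) (auto intro: power_mono)
  have int_s: "integrable (torus_measure d) (\<lambda>\<theta>. (cmod (s \<theta>))\<^sup>2)"
    using s_le by (intro integrable_torus_measure_bounded[where B="C\<^sup>2"]) (auto intro: power_mono)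
  have int_r: "integrable (torus_measure d) r"
    unfolding r_def by (rule integrable_Re[OF gs])
  have "integral\<^sup>L (torus_measure d) (\<lambda>\<theta>. g \<theta> * cnj (s \<theta>)) = (\<Sum>x\<in>S. cnj (c x) * c x)"
    using integral_mult_cnj_trig_poly[OF g, of S c] unfolding s_def c_def by simp
  also have "\<dots> = of_real (\<Sum>x\<in>S. (cmod (c x))\<^sup>2)"
    unfolding of_real_sum by (intro sum.cong refl) (subst complex_norm_square, rule mult.commute)
  finally have cross: "integral\<^sup>L (torus_measure d) r = (\<Sum>x\<in>S. (cmod (c x))\<^sup>2)"
    unfolding r_def integral_Re[OF gs] by (simp only: Re_complex_of_real)
  have "0 \<le> integral\<^sup>L (torus_measure d) (\<lambda>\<theta>. (cmod (g \<theta> - s \<theta>))\<^sup>2)"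
    by simp
  also have "(\<lambda>\<theta>. (cmod (g \<theta> - s \<theta>))\<^sup>2) = (\<lambda>\<theta>. (cmod (g \<theta>))\<^sup>2 - 2 * r \<theta> + (cmod (s \<theta>))\<^sup>2)"
    unfolding r_def by (simp add: cmod_power2 power2_diff algebra_simps)
  also have "integral\<^sup>L (torus_measure d) \<dots> =
      integral\<^sup>L (torus_measure d) (\<lambda>\<theta>. (cmod (g \<theta>))\<^sup>2) - (\<Sum>x\<in>S. (cmod (c x))\<^sup>2)"
    using int_g int_s int_r S by (simp add: cross s_def integral_norm_sq_trig_poly)
  finally show ?thesis unfolding c_def by simp
qed

section \<open>The Hilbert space \<open>l2space d\<close>\<close>

lemma summable_on_sum:
  fixes f :: "'i \<Rightarrow> 'a \<Rightarrow> 'b::{topological_comm_monoid_add,t2_space}"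
  assumes "finite I" "\<And>i. i \<in> I \<Longrightarrow> f i summable_on A"
  shows "(\<lambda>x. \<Sum>i\<in>I. f i x) summable_on A"
  using assms by (induction I rule: finite_induct) (auto intro!: summable_on_add)

lemma infsum_sum:
  fixes f :: "'i \<Rightarrow> 'a \<Rightarrow> 'b::{topological_comm_monoid_add,t2_space}"
  assumes "finite I" "\<And>i. i \<in> I \<Longrightarrow> f i summable_on A"
  shows "infsum (\<lambda>x. \<Sum>i\<in>I. f i x) A = (\<Sum>i\<in>I. infsum (f i) A)"
  using assms
proof (induction I rule: finite_induct)
  case (insert i I)
  then have "infsum (\<lambda>x. f i x + (\<Sum>i\<in>I. f i x)) A = infsum (f i) A + infsum (\<lambda>x. \<Sum>i\<in>I. f i x) A"
    by (intro infsum_add summable_on_sum) auto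
  with insert show ?case by simp
qed simp

lemma infsum_diff:
  fixes f g :: "'a \<Rightarrow> 'b::{topological_ab_group_add,t2_space}"
  assumes "f summable_on A" "g summable_on A"
  shows "infsum (\<lambda>x. f x - g x) A = infsum f A - infsum g A"
  using infsum_add[OF assms(1) summable_on_uminus[THEN iffD2, OF assms(2)]]
  by (simp add: infsum_uminus)

lemma infsum_of_real:
  fixes f :: "'a \<Rightarrow> real"
  shows "infsum (\<lambda>x. complex_of_real (f x)) A = of_real (infsum f A)"
proof (cases "f summable_on A")
  case True
  show ?thesis by (rule infsumI[OF has_sum_of_real[OF has_sum_infsum[OF True]]])
next
  case False
  then have "\<not> (\<lambda>x. complex_of_real (f x)) summable_on A"
    using summable_on_Re by fastforce
  with False show ?thesis by (simp add: infsum_not_exists)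
qed

lemma weighted_amgm:
  fixes a b t :: real
  assumes "0 < t"
  shows "a * b \<le> (t * a\<^sup>2 + b\<^sup>2 / t) / 2"
proof -
  have "0 \<le> (t * a - b)\<^sup>2 / t" using assms by simp
  also have "\<dots> = t * a\<^sup>2 + b\<^sup>2 / t - 2 * (a * b)"
    using assms by (simp add: power2_diff field_simps power2_eq_square)
  finally show ?thesis by simp
qed

lemma sum_norm_mult_le:
  fixes u v :: "'i \<Rightarrow> complex"
  assumes "0 < t"
  shows "(\<Sum>k\<in>I. cmod (u k) * cmod (v k)) \<le>
    (t * (\<Sum>k\<in>I. (cmod (u k))\<^sup>2) + (\<Sum>k\<in>I. (cmod (v k))\<^sup>2) / t) / 2"
proof -
  have "(\<Sum>k\<in>I. cmod (u k) * cmod (v k)) \<le> (\<Sum>k\<in>I. (t * (cmod (u k))\<^sup>2 + (cmod (v k))\<^sup>2 / t) / 2)"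
    by (intro sum_mono weighted_amgm assms)
  then show ?thesis
    by (simp add: sum_divide_distrib[symmetric] sum_distrib_left sum.distrib)
qed

definition coin_index :: "nat \<Rightarrow> nat set" where
  "coin_index d = {1..2*d+1}"

lemma finite_coin_index[simp]: "finite (coin_index d)"
  unfolding coin_index_def by simp

definition coin_vector :: "nat \<Rightarrow> (nat \<Rightarrow> complex) \<Rightarrow> bool" where
  "coin_vector d \<phi> \<longleftrightarrow> (\<forall>k. k \<notin> coin_index d \<longrightarrow> \<phi> k = 0)"

definition l2norm_sq :: "nat \<Rightarrow> ((nat \<Rightarrow> int) \<Rightarrow> nat \<Rightarrow> complex) \<Rightarrow> real" where
  "l2norm_sq d \<psi> = infsum (\<lambda>x. \<Sum>k\<in>coin_index d. (cmod (\<psi> x k))\<^sup>2) (Zd d)"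

lemma l2space_iff: "\<psi> \<in> l2space d \<longleftrightarrow>
    (\<forall>x. x \<notin> Zd d \<longrightarrow> \<psi> x = (\<lambda>_. 0)) \<and> (\<forall>x k. k \<notin> coin_index d \<longrightarrow> \<psi> x k = 0) \<and>
    (\<lambda>x. \<Sum>k\<in>coin_index d. (cmod (\<psi> x k))\<^sup>2) summable_on Zd d"
  unfolding l2space_def coin_index_def by simp

lemma l2spaceD:
  assumes "\<psi> \<in> l2space d"
  shows "\<And>x. x \<notin> Zd d \<Longrightarrow> \<psi> x = (\<lambda>_. 0)" "\<And>x k. k \<notin> coin_index d \<Longrightarrow> \<psi> x k = 0"
    "(\<lambda>x. \<Sum>k\<in>coin_index d. (cmod (\<psi> x k))\<^sup>2) summable_on Zd d"
  using assms unfolding l2space_iff by blast+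

lemma l2spaceI:
  assumes "\<And>x. x \<notin> Zd d \<Longrightarrow> \<psi> x = (\<lambda>_. 0)" "\<And>x k. k \<notin> coin_index d \<Longrightarrow> \<psi> x k = 0"
    "(\<lambda>x. \<Sum>k\<in>coin_index d. (cmod (\<psi> x k))\<^sup>2) summable_on Zd d"
  shows "\<psi> \<in> l2space d"
  using assms unfolding l2space_iff by blast

lemma l2inner_eq: "l2inner d a b = infsum (\<lambda>x. \<Sum>k\<in>coin_index d. a x k * cnj (b x k)) (Zd d)"
  unfolding l2inner_def coin_index_def ..

lemma l2norm_sq_nonneg: "0 \<le> l2norm_sq d a"
  unfolding l2norm_sq_def by (rule infsum_nonneg) (simp add: sum_nonneg)

lemma l2inner_abs_summable:
  assumes a: "a \<in> l2space d" and b: "b \<in> l2space d"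
  shows "(\<lambda>x. \<Sum>k\<in>coin_index d. cmod (a x k) * cmod (b x k)) summable_on Zd d"
proof (rule summable_on_comparison_test)
  show "(\<lambda>x. (\<Sum>k\<in>coin_index d. (cmod (a x k))\<^sup>2) + (\<Sum>k\<in>coin_index d. (cmod (b x k))\<^sup>2)) summable_on Zd d"
    by (intro summable_on_add l2spaceD(3) a b)
  show "(\<Sum>k\<in>coin_index d. cmod (a x k) * cmod (b x k)) \<le>
      (\<Sum>k\<in>coin_index d. (cmod (a x k))\<^sup>2) + (\<Sum>k\<in>coin_index d. (cmod (b x k))\<^sup>2)" for x
    using sum_norm_mult_le[where t=1 and I="coin_index d" and u="a x" and v="b x"]
      sum_nonneg[of "coin_index d" "\<lambda>k. cmod (a x k) * cmod (b x k)"]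
    by simp
qed (simp add: sum_nonneg)

lemma l2inner_summable:
  assumes "a \<in> l2space d" "b \<in> l2space d"
  shows "(\<lambda>x. \<Sum>k\<in>coin_index d. a x k * cnj (b x k)) summable_on Zd d"
proof -
  have "(\<lambda>x. norm (\<Sum>k\<in>coin_index d. a x k * cnj (b x k))) summable_on Zd d"
  proof (rule summable_on_comparison_test[OF l2inner_abs_summable[OF assms]])
    fix x
    have "norm (\<Sum>k\<in>coin_index d. a x k * cnj (b x k)) \<le> (\<Sum>k\<in>coin_index d. cmod (a x k) * cmod (b x k))"
      by (rule order_trans[OF norm_sum]) (simp add: norm_mult)
    then show "norm (\<Sum>k\<in>coin_index d. a x k * cnj (b x k)) \<le>
        (\<Sum>k\<in>coin_index d. cmod (a x k) * cmod (b x k))" .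
  qed simp
  then show ?thesis by (simp add: summable_on_iff_abs_summable_on_complex)
qed

lemma norm_l2inner_le:
  assumes a: "a \<in> l2space d" and b: "b \<in> l2space d" and t: "0 < t"
  shows "cmod (l2inner d a b) \<le> (t * l2norm_sq d a + l2norm_sq d b / t) / 2"
proof -
  define A where "A x = (\<Sum>k\<in>coin_index d. (cmod (a x k))\<^sup>2)" for x
  define B where "B x = (\<Sum>k\<in>coin_index d. (cmod (b x k))\<^sup>2)" for x
  have A: "A summable_on Zd d" and B: "B summable_on Zd d"
    unfolding A_def B_def by (rule l2spaceD(3)[OF a], rule l2spaceD(3)[OF b])
  have AB: "(\<lambda>x. (t / 2) * A x + (1 / (2 * t)) * B x) summable_on Zd d"
    by (intro summable_on_add summable_on_cmult_right A B)
  have "cmod (l2inner d a b) \<le> infsum (\<lambda>x. norm (\<Sum>k\<in>coin_index d. a x k * cnj (b x k))) (Zd d)"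
    unfolding l2inner_eq
    by (rule norm_infsum_bound)
      (simp add: l2inner_summable[OF a b] flip: summable_on_iff_abs_summable_on_complex)
  also have "\<dots> \<le> infsum (\<lambda>x. (t / 2) * A x + (1 / (2 * t)) * B x) (Zd d)"
  proof (rule infsum_mono[OF _ AB])
    show "(\<lambda>x. norm (\<Sum>k\<in>coin_index d. a x k * cnj (b x k))) summable_on Zd d"
      using l2inner_summable[OF a b] by (simp add: summable_on_iff_abs_summable_on_complex)
    fix x
    have "norm (\<Sum>k\<in>coin_index d. a x k * cnj (b x k)) \<le> (\<Sum>k\<in>coin_index d. cmod (a x k) * cmod (b x k))"
      by (rule order_trans[OF norm_sum]) (simp add: norm_mult)
    also have "\<dots> \<le> (t / 2) * A x + (1 / (2 * t)) * B x"
      using sum_norm_mult_le[OF t, where I="coin_index d" and u="a x" and v="b x"] unfolding A_def B_def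
      by (simp add: field_simps)
    finally show "norm (\<Sum>k\<in>coin_index d. a x k * cnj (b x k)) \<le> (t / 2) * A x + (1 / (2 * t)) * B x" .
  qed
  also have "\<dots> = (t / 2) * infsum A (Zd d) + (1 / (2 * t)) * infsum B (Zd d)"
    by (simp only: infsum_add[OF summable_on_cmult_right[OF A] summable_on_cmult_right[OF B]]
        infsum_cmult_right[OF A] infsum_cmult_right[OF B])
  also have "\<dots> = (t * l2norm_sq d a + l2norm_sq d b / t) / 2"
    unfolding l2norm_sq_def A_def B_def using t by (simp add: field_simps)
  finally show ?thesis .
qed

lemma l2inner_diff_left:
  assumes a: "a \<in> l2space d" and b: "b \<in> l2space d" and c: "c \<in> l2space d"
  shows "l2inner d (\<lambda>x k. a x k - b x k) c = l2inner d a c - l2inner d b c"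
proof -
  have "l2inner d (\<lambda>x k. a x k - b x k) c = infsum (\<lambda>x. (\<Sum>k\<in>coin_index d. a x k * cnj (c x k)) -
      (\<Sum>k\<in>coin_index d. b x k * cnj (c x k))) (Zd d)"
    unfolding l2inner_eq by (simp add: algebra_simps sum_subtractf)
  also have "\<dots> = l2inner d a c - l2inner d b c"
    unfolding l2inner_eq by (rule infsum_diff[OF l2inner_summable[OF a c] l2inner_summable[OF b c]])
  finally show ?thesis .
qed

lemma l2inner_self: "l2inner d a a = of_real (l2norm_sq d a)"
  unfolding l2inner_eq l2norm_sq_def
  by (simp only: complex_norm_square[symmetric] of_real_sum[symmetric] infsum_of_real)

lemma l2space_eq_0:
  assumes a: "a \<in> l2space d" and "l2norm_sq d a = 0"
  shows "a = (\<lambda>x k. 0)"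
proof (intro ext)
  fix x k
  show "a x k = 0"
  proof (cases "x \<in> Zd d \<and> k \<in> coin_index d")
    case True
    have "(\<Sum>k\<in>coin_index d. (cmod (a x k))\<^sup>2) = 0"
      by (rule nonneg_infsum_le_0D[where A="Zd d"])
        (use assms l2spaceD(3)[OF a] True in \<open>auto simp: l2norm_sq_def intro: sum_nonneg\<close>)
    with True show ?thesis by (simp add: sum_nonneg_eq_0_iff)
  next
    case False
    then show ?thesis using l2spaceD(1)[OF a, of x] l2spaceD(2)[OF a, of k x] by auto
  qed
qed

lemma l2space_diff:
  assumes a: "a \<in> l2space d" and b: "b \<in> l2space d"
  shows "(\<lambda>x k. a x k - b x k) \<in> l2space d"
proof (rule l2spaceI)
  show "\<And>x. x \<notin> Zd d \<Longrightarrow> (\<lambda>k. a x k - b x k) = (\<lambda>_. 0)"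
    using l2spaceD(1)[OF a] l2spaceD(1)[OF b] by (auto simp: fun_eq_iff)
  show "\<And>x k. k \<notin> coin_index d \<Longrightarrow> a x k - b x k = 0"
    using l2spaceD(2)[OF a] l2spaceD(2)[OF b] by auto
  have s: "(\<lambda>x. 2 * (\<Sum>k\<in>coin_index d. (cmod (a x k))\<^sup>2) + 2 * (\<Sum>k\<in>coin_index d. (cmod (b x k))\<^sup>2))
      summable_on Zd d"
    by (intro summable_on_add summable_on_cmult_right l2spaceD(3) a b)
  show "(\<lambda>x. \<Sum>k\<in>coin_index d. (cmod (a x k - b x k))\<^sup>2) summable_on Zd d"
  proof (rule summable_on_comparison_test[OF s])
    fix x
    have diff_sq: "(cmod (u - v))\<^sup>2 \<le> 2 * (cmod u)\<^sup>2 + 2 * (cmod v)\<^sup>2" for u v :: complex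
    proof -
      have "(cmod (u - v))\<^sup>2 \<le> (cmod u + cmod v)\<^sup>2"
        by (intro power_mono norm_triangle_ineq4) simp
      also have "\<dots> \<le> 2 * (cmod u)\<^sup>2 + 2 * (cmod v)\<^sup>2"
        using weighted_amgm[where t=1 and a="cmod u" and b="cmod v"] by (simp add: power2_sum)
      finally show ?thesis .
    qed
    have "(\<Sum>k\<in>coin_index d. (cmod (a x k - b x k))\<^sup>2) \<le>
        (\<Sum>k\<in>coin_index d. 2 * (cmod (a x k))\<^sup>2 + 2 * (cmod (b x k))\<^sup>2)"
      by (intro sum_mono diff_sq)
    then show "(\<Sum>k\<in>coin_index d. (cmod (a x k - b x k))\<^sup>2) \<le>
        2 * (\<Sum>k\<in>coin_index d. (cmod (a x k))\<^sup>2) + 2 * (\<Sum>k\<in>coin_index d. (cmod (b x k))\<^sup>2)"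
      by (simp add: sum_distrib_left sum.distrib)
  qed (simp add: sum_nonneg)
qed

lemma grover_diff: "grover D (\<lambda>k. u k - v k) k = grover D u k - grover D v k"
  unfolding grover_def by (simp add: sum_subtractf algebra_simps)

lemma grover_cmult: "grover D (\<lambda>k. c * u k) k = c * grover D u k"
  unfolding grover_def by (simp add: sum_distrib_left[symmetric] algebra_simps)

lemma grover_zero: "grover D (\<lambda>l. 0) k = 0"
  unfolding grover_def by simp

lemma eigenspace1_diff:
  assumes "a \<in> eigenspace1 d" "b \<in> eigenspace1 d"
  shows "(\<lambda>x k. a x k - b x k) \<in> eigenspace1 d"
proof -
  have "U_lazy d (\<lambda>x k. a x k - b x k) = (\<lambda>x k. U_lazy d a x k - U_lazy d b x k)"
    unfolding U_lazy_def by (simp add: grover_diff)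
  with assms show ?thesis unfolding eigenspace1_def by (auto simp: l2space_diff)
qed

lemma proj_plus_eqI:
  assumes \<psi>: "\<psi> \<in> l2space d" and p: "p \<in> eigenspace1 d"
    and orth: "\<And>e. e \<in> eigenspace1 d \<Longrightarrow> l2inner d (\<lambda>x k. \<psi> x k - p x k) e = 0"
  shows "proj_plus d \<psi> = p"
  unfolding proj_plus_def
proof (rule the_equality)
  show "p \<in> eigenspace1 d \<and> (\<forall>e\<in>eigenspace1 d. l2inner d (\<lambda>x k. \<psi> x k - p x k) e = 0)"
    using p orth by auto
  fix p' assume p': "p' \<in> eigenspace1 d \<and> (\<forall>e\<in>eigenspace1 d. l2inner d (\<lambda>x k. \<psi> x k - p' x k) e = 0)"
  have l2: "p \<in> l2space d" "p' \<in> l2space d" using p p' unfolding eigenspace1_def by auto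
  define q where "q = (\<lambda>x k. p x k - p' x k)"
  have q: "q \<in> eigenspace1 d" unfolding q_def using p p' by (intro eigenspace1_diff) auto
  then have "q \<in> l2space d" unfolding eigenspace1_def by auto
  moreover have "q = (\<lambda>x k. (\<psi> x k - p' x k) - (\<psi> x k - p x k))" unfolding q_def by auto
  ultimately have "l2inner d q q =
      l2inner d (\<lambda>x k. \<psi> x k - p' x k) q - l2inner d (\<lambda>x k. \<psi> x k - p x k) q"
    using l2inner_diff_left[OF l2space_diff[OF \<psi> l2(2)] l2space_diff[OF \<psi> l2(1)]] by simp
  also have "\<dots> = 0" using p' orth q by simp
  finally have "q = (\<lambda>x k. 0)"
    using \<open>q \<in> l2space d\<close> by (intro l2space_eq_0) (simp_all add: l2inner_self)
  then show "p' = p" unfolding q_def by (auto simp: fun_eq_iff)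
qed

section \<open>Fourier coefficients of bounded symbols\<close>

definition bounded_symbol :: "nat \<Rightarrow> ((nat \<Rightarrow> real) \<Rightarrow> nat \<Rightarrow> complex) \<Rightarrow> bool" where
  "bounded_symbol d f \<longleftrightarrow>
    (\<forall>k. (\<lambda>\<theta>. f \<theta> k) \<in> borel_measurable (torus_measure d)) \<and> (\<exists>B. \<forall>\<theta> k. cmod (f \<theta> k) \<le> B) \<and>
    (\<forall>\<theta> k. k \<notin> coin_index d \<longrightarrow> f \<theta> k = 0)"

lemma bounded_symbolI:
  assumes "\<And>k. (\<lambda>\<theta>. f \<theta> k) \<in> borel_measurable (torus_measure d)" "\<And>\<theta> k. cmod (f \<theta> k) \<le> B"
    "\<And>\<theta> k. k \<notin> coin_index d \<Longrightarrow> f \<theta> k = 0"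
  shows "bounded_symbol d f"
  using assms unfolding bounded_symbol_def by blast

lemma bounded_symbolD:
  assumes "bounded_symbol d f"
  shows "\<And>k. (\<lambda>\<theta>. f \<theta> k) \<in> borel_measurable (torus_measure d)" "\<exists>B. \<forall>\<theta> k. cmod (f \<theta> k) \<le> B"
    "\<And>\<theta> k. k \<notin> coin_index d \<Longrightarrow> f \<theta> k = 0"
  using assms unfolding bounded_symbol_def by blast+

lemma bounded_symbol_mult:
  assumes f: "bounded_symbol d f"
    and c: "c \<in> borel_measurable (torus_measure d)" "\<And>\<theta>. cmod (c \<theta>) \<le> C"
  shows "bounded_symbol d (\<lambda>\<theta> k. c \<theta> * f \<theta> k)"
proof -
  obtain B where B: "\<And>\<theta> k. cmod (f \<theta> k) \<le> B" using bounded_symbolD(2)[OF f] by blast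
  have "0 \<le> C" using c(2)[of undefined] by (meson norm_ge_zero order_trans)
  then have "cmod (c \<theta> * f \<theta> k) \<le> C * B" for \<theta> k
    unfolding norm_mult by (intro mult_mono c B) simp_all
  with bounded_symbolD[OF f] c show ?thesis by (intro bounded_symbolI) auto
qed

lemma bounded_symbol_add:
  assumes f: "bounded_symbol d f" and g: "bounded_symbol d g"
  shows "bounded_symbol d (\<lambda>\<theta> k. f \<theta> k + g \<theta> k)"
proof -
  obtain B C where "\<And>\<theta> k. cmod (f \<theta> k) \<le> B" "\<And>\<theta> k. cmod (g \<theta> k) \<le> C"
    using bounded_symbolD(2)[OF f] bounded_symbolD(2)[OF g] by blast
  then have "cmod (f \<theta> k + g \<theta> k) \<le> B + C" for \<theta> k
    by (intro order_trans[OF norm_triangle_ineq] add_mono)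
  with bounded_symbolD[OF f] bounded_symbolD[OF g] show ?thesis by (intro bounded_symbolI) auto
qed

lemma bounded_symbol_diff:
  assumes f: "bounded_symbol d f" and g: "bounded_symbol d g"
  shows "bounded_symbol d (\<lambda>\<theta> k. f \<theta> k - g \<theta> k)"
  using bounded_symbol_add[OF f bounded_symbol_mult[OF g, of "\<lambda>_. -1" 1]] by simp

lemma integrable_mult_bounded_symbol:
  assumes f: "bounded_symbol d f"
    and c: "c \<in> borel_measurable (torus_measure d)" "\<And>\<theta>. cmod (c \<theta>) \<le> C"
  shows "integrable (torus_measure d) (\<lambda>\<theta>. c \<theta> * f \<theta> k)"
proof -
  obtain B where "\<And>\<theta> k. cmod (c \<theta> * f \<theta> k) \<le> B"
    using bounded_symbolD(2)[OF bounded_symbol_mult[OF f c]] by blast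
  then show ?thesis
    using bounded_symbolD(1)[OF bounded_symbol_mult[OF f c]] by (intro integrable_torus_measure_bounded)
qed

lemma integrable_norm_sq_bounded_symbol:
  assumes f: "bounded_symbol d f"
  shows "integrable (torus_measure d) (\<lambda>\<theta>. (cmod (f \<theta> k))\<^sup>2)"
proof -
  obtain B where B: "\<And>\<theta> k. cmod (f \<theta> k) \<le> B" using bounded_symbolD(2)[OF f] by blast
  show ?thesis
    by (rule integrable_torus_measure_bounded[where B="B\<^sup>2"])
      (use bounded_symbolD(1)[OF f] B in \<open>auto intro!: power_mono\<close>)
qed

definition fourier_coeffs ::
    "nat \<Rightarrow> ((nat \<Rightarrow> real) \<Rightarrow> nat \<Rightarrow> complex) \<Rightarrow> (nat \<Rightarrow> int) \<Rightarrow> nat \<Rightarrow> complex" where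
  "fourier_coeffs d f = (\<lambda>x k. if x \<in> Zd d
     then integral\<^sup>L (torus_measure d) (\<lambda>\<theta>. character d (\<lambda>j. - x j) \<theta> * f \<theta> k) else 0)"

lemma bessel_inequality_fourier_coeffs:
  assumes f: "bounded_symbol d f" and S: "finite S" "S \<subseteq> Zd d"
  shows "(\<Sum>x\<in>S. \<Sum>k\<in>coin_index d. (cmod (fourier_coeffs d f x k))\<^sup>2) \<le>
    integral\<^sup>L (torus_measure d) (\<lambda>\<theta>. \<Sum>k\<in>coin_index d. (cmod (f \<theta> k))\<^sup>2)"
proof -
  obtain B where B: "\<And>\<theta> k. cmod (f \<theta> k) \<le> B" using bounded_symbolD(2)[OF f] by blast
  have "(\<Sum>x\<in>S. \<Sum>k\<in>coin_index d. (cmod (fourier_coeffs d f x k))\<^sup>2) =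
      (\<Sum>k\<in>coin_index d. \<Sum>x\<in>S. (cmod (fourier_coeffs d f x k))\<^sup>2)"
    by (rule sum.swap)
  also have "\<dots> \<le> (\<Sum>k\<in>coin_index d. integral\<^sup>L (torus_measure d) (\<lambda>\<theta>. (cmod (f \<theta> k))\<^sup>2))"
  proof (rule sum_mono)
    fix k
    have "(\<Sum>x\<in>S. (cmod (fourier_coeffs d f x k))\<^sup>2) = (\<Sum>x\<in>S.
        (cmod (integral\<^sup>L (torus_measure d) (\<lambda>\<theta>. character d (\<lambda>j. - x j) \<theta> * f \<theta> k)))\<^sup>2)"
      using S by (intro sum.cong refl) (auto simp: fourier_coeffs_def)
    also have "\<dots> \<le> integral\<^sup>L (torus_measure d) (\<lambda>\<theta>. (cmod (f \<theta> k))\<^sup>2)"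
      by (rule bessel_inequality_character[OF bounded_symbolD(1)[OF f] B S])
    finally show "(\<Sum>x\<in>S. (cmod (fourier_coeffs d f x k))\<^sup>2) \<le>
        integral\<^sup>L (torus_measure d) (\<lambda>\<theta>. (cmod (f \<theta> k))\<^sup>2)" .
  qed
  also have "\<dots> = integral\<^sup>L (torus_measure d) (\<lambda>\<theta>. \<Sum>k\<in>coin_index d. (cmod (f \<theta> k))\<^sup>2)"
    by (rule Bochner_Integration.integral_sum[symmetric]) (rule integrable_norm_sq_bounded_symbol[OF f])
  finally show ?thesis .
qed

lemma fourier_coeffs_in_l2space:
  assumes f: "bounded_symbol d f"
  shows "fourier_coeffs d f \<in> l2space d"
proof (rule l2spaceI)
  show "(\<lambda>x. \<Sum>k\<in>coin_index d. (cmod (fourier_coeffs d f x k))\<^sup>2) summable_on Zd d"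
    by (rule nonneg_bdd_above_summable_on)
      (auto intro!: sum_nonneg bdd_aboveI bessel_inequality_fourier_coeffs[OF f])
qed (auto simp: fourier_coeffs_def bounded_symbolD(3)[OF f])

lemma l2norm_sq_fourier_coeffs_le:
  assumes f: "bounded_symbol d f"
  shows "l2norm_sq d (fourier_coeffs d f) \<le>
    integral\<^sup>L (torus_measure d) (\<lambda>\<theta>. \<Sum>k\<in>coin_index d. (cmod (f \<theta> k))\<^sup>2)"
  unfolding l2norm_sq_def
  by (rule infsum_le_finite_sums[OF l2spaceD(3)[OF fourier_coeffs_in_l2space[OF f]]])
    (auto intro: bessel_inequality_fourier_coeffs[OF f])

lemma fourier_coeffs_const: "fourier_coeffs d (\<lambda>\<theta> k. \<phi> k) = delta0 \<phi>"
proof (intro ext)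
  fix x k
  show "fourier_coeffs d (\<lambda>\<theta> k. \<phi> k) x k = delta0 \<phi> x k"
  proof (cases "x \<in> Zd d")
    case True
    have "(\<lambda>j. - x j) = (\<lambda>_. 0) \<longleftrightarrow> x = (\<lambda>_. 0)" by (auto simp: fun_eq_iff)
    then show ?thesis
      using True by (simp add: fourier_coeffs_def delta0_def integral_character[OF Zd_uminus])
  next
    case False
    then have "x \<noteq> (\<lambda>_. 0)" by (auto simp: Zd_def)
    with False show ?thesis by (simp add: fourier_coeffs_def delta0_def)
  qed
qed

lemma fourier_coeffs_diff:
  assumes f: "bounded_symbol d f" and g: "bounded_symbol d g"
  shows "fourier_coeffs d (\<lambda>\<theta> k. f \<theta> k - g \<theta> k) = (\<lambda>x k. fourier_coeffs d f x k - fourier_coeffs d g x k)"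
proof (intro ext)
  fix x k
  have "integrable (torus_measure d) (\<lambda>\<theta>. character d (\<lambda>j. - x j) \<theta> * h \<theta> k)"
    if "bounded_symbol d h" for h
    by (rule integrable_mult_bounded_symbol[OF that, where C=1]) auto
  then show "fourier_coeffs d (\<lambda>\<theta> k. f \<theta> k - g \<theta> k) x k = fourier_coeffs d f x k - fourier_coeffs d g x k"
    using f g by (simp add: fourier_coeffs_def right_diff_distrib)
qed

section \<open>The walk in Fourier space\<close>

lemma shift_lazy_in_Zd: "shift_lazy d k \<in> Zd d"
  unfolding shift_lazy_def unitv_def Zd_def by auto

lemma integral_grover:
  assumes "\<And>l. integrable M (g l)"
  shows "integral\<^sup>L M (\<lambda>\<theta>. grover D (\<lambda>l. g l \<theta>) k) = grover D (\<lambda>l. integral\<^sup>L M (g l)) k"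
proof (cases "k \<in> {1..D}")
  case False
  then have "\<And>v. grover D v k = 0" unfolding grover_def by auto
  then show ?thesis by simp
qed (use assms in \<open>simp add: grover_def Bochner_Integration.integral_sum\<close>)

definition U_symbol ::
    "nat \<Rightarrow> ((nat \<Rightarrow> real) \<Rightarrow> nat \<Rightarrow> complex) \<Rightarrow> (nat \<Rightarrow> real) \<Rightarrow> nat \<Rightarrow> complex" where
  "U_symbol d f \<theta> k = character d (shift_lazy d k) \<theta> * grover (2*d+1) (f \<theta>) k"

definition U_adjoint_symbol ::
    "nat \<Rightarrow> ((nat \<Rightarrow> real) \<Rightarrow> nat \<Rightarrow> complex) \<Rightarrow> (nat \<Rightarrow> real) \<Rightarrow> nat \<Rightarrow> complex" where
  "U_adjoint_symbol d f \<theta> k =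
    grover (2*d+1) (\<lambda>l. character d (\<lambda>i. - shift_lazy d l i) \<theta> * f \<theta> l) k"

definition U_adjoint :: "nat \<Rightarrow> ((nat \<Rightarrow> int) \<Rightarrow> nat \<Rightarrow> complex) \<Rightarrow> (nat \<Rightarrow> int) \<Rightarrow> nat \<Rightarrow> complex" where
  "U_adjoint d r = (\<lambda>x k. if x \<in> Zd d
     then grover (2*d+1) (\<lambda>l. r (\<lambda>i. x i + shift_lazy d l i) l) k else 0)"

lemma U_lazy_fourier_coeffs:
  assumes f: "bounded_symbol d f"
  shows "U_lazy d (fourier_coeffs d f) = fourier_coeffs d (U_symbol d f)"
proof (intro ext)
  fix x k
  define s where "s = shift_lazy d k"
  define y where "y = (\<lambda>i. x i - s i)"
  have s: "s \<in> Zd d" unfolding s_def by (rule shift_lazy_in_Zd)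
  have U: "U_lazy d (fourier_coeffs d f) x k = grover (2*d+1) (fourier_coeffs d f y) k"
    unfolding U_lazy_def y_def s_def ..
  show "U_lazy d (fourier_coeffs d f) x k = fourier_coeffs d (U_symbol d f) x k"
  proof (cases "x \<in> Zd d")
    case True
    have y: "y \<in> Zd d" unfolding y_def by (rule Zd_diff[OF True s])
    define c where "c \<theta> = character d (\<lambda>j. - x j) \<theta> * character d s \<theta>" for \<theta>
    have "c \<theta> = character d (\<lambda>j. - y j) \<theta>" for \<theta>
      unfolding c_def y_def character_mult by (simp add: algebra_simps)
    then have coeffs_y: "fourier_coeffs d f y = (\<lambda>l. integral\<^sup>L (torus_measure d) (\<lambda>\<theta>. c \<theta> * f \<theta> l))"
      using y by (auto simp: fourier_coeffs_def fun_eq_iff)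
    have "c \<in> borel_measurable (torus_measure d)" unfolding c_def by measurable
    moreover have "cmod (c \<theta>) \<le> 1" for \<theta> unfolding c_def by (simp add: norm_mult)
    ultimately have "grover (2*d+1) (fourier_coeffs d f y) k =
        integral\<^sup>L (torus_measure d) (\<lambda>\<theta>. grover (2*d+1) (\<lambda>l. c \<theta> * f \<theta> l) k)"
      unfolding coeffs_y by (intro integral_grover[symmetric] integrable_mult_bounded_symbol[OF f])
    then show ?thesis
      unfolding U using True by (simp add: fourier_coeffs_def U_symbol_def grover_cmult c_def s_def mult.assoc)
  next
    case False
    then have "y \<notin> Zd d" using Zd_add[OF _ s, of y] unfolding y_def by auto
    with False show ?thesis unfolding U by (simp add: fourier_coeffs_def grover_zero)
  qed
qed

lemma U_adjoint_fourier_coeffs: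
  assumes f: "bounded_symbol d f"
  shows "U_adjoint d (fourier_coeffs d f) = fourier_coeffs d (U_adjoint_symbol d f)"
proof (intro ext)
  fix x k
  show "U_adjoint d (fourier_coeffs d f) x k = fourier_coeffs d (U_adjoint_symbol d f) x k"
  proof (cases "x \<in> Zd d")
    case True
    define c where "c l \<theta> = character d (\<lambda>j. - x j) \<theta> * character d (\<lambda>i. - shift_lazy d l i) \<theta>" for l \<theta>
    have "c l \<theta> = character d (\<lambda>j. - (x j + shift_lazy d l j)) \<theta>" for l \<theta>
      unfolding c_def character_mult by (simp add: algebra_simps)
    then have coeffs: "fourier_coeffs d f (\<lambda>i. x i + shift_lazy d l i) l =
        integral\<^sup>L (torus_measure d) (\<lambda>\<theta>. c l \<theta> * f \<theta> l)" for l
      using Zd_add[OF True shift_lazy_in_Zd] by (simp add: fourier_coeffs_def)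
    have "c l \<in> borel_measurable (torus_measure d)" for l unfolding c_def by measurable
    moreover have "cmod (c l \<theta>) \<le> 1" for l \<theta> unfolding c_def by (simp add: norm_mult)
    ultimately have "grover (2*d+1) (\<lambda>l. integral\<^sup>L (torus_measure d) (\<lambda>\<theta>. c l \<theta> * f \<theta> l)) k =
        integral\<^sup>L (torus_measure d) (\<lambda>\<theta>. grover (2*d+1) (\<lambda>l. c l \<theta> * f \<theta> l) k)"
      by (intro integral_grover[symmetric] integrable_mult_bounded_symbol[OF f])
    also have "\<dots> = fourier_coeffs d (U_adjoint_symbol d f) x k"
      using True by (simp add: fourier_coeffs_def U_adjoint_symbol_def c_def mult.assoc grover_cmult)
    finally show ?thesis
      using True by (simp add: U_adjoint_def coeffs)
  next
    case False
    then show ?thesis by (simp add: fourier_coeffs_def U_adjoint_def)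
  qed
qed

lemma bij_betw_Zd_translate:
  assumes "s \<in> Zd d"
  shows "bij_betw (\<lambda>y. \<lambda>i. y i + s i) (Zd d) (Zd d)"
  by (rule bij_betw_byWitness[where f'="\<lambda>y. \<lambda>i. y i - s i"])
    (use assms in \<open>auto intro: Zd_add Zd_diff\<close>)

lemma norm_grover_le: "cmod (grover D u k) \<le> 3 * (\<Sum>l=1..D. cmod (u l))"
proof (cases "k \<in> {1..D}")
  case True
  have "cmod (2 / of_nat D :: complex) \<le> 2"
    using True by (simp add: norm_divide field_simps)
  then have "cmod ((2 / of_nat D) * (\<Sum>l=1..D. u l)) \<le> 2 * (\<Sum>l=1..D. cmod (u l))"
    unfolding norm_mult by (intro mult_mono norm_sum) auto
  moreover have "cmod (u k) \<le> (\<Sum>l=1..D. cmod (u l))"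
    using True by (intro member_le_sum) auto
  ultimately show ?thesis
    using True norm_triangle_ineq4[of "(2 / of_nat D) * (\<Sum>l=1..D. u l)" "u k"]
    by (simp add: grover_def)
next
  case False
  then have "grover D u k = 0" unfolding grover_def by auto
  then show ?thesis by (simp add: sum_nonneg)
qed

lemma grover_self_adjoint:
  "(\<Sum>k=1..D. grover D v k * cnj (u k)) = (\<Sum>k=1..D. v k * cnj (grover D u k))"
proof -
  define c :: complex where "c = 2 / of_nat D"
  define S where "S = (\<Sum>l=1..D. v l)"
  define T where "T = (\<Sum>l=1..D. cnj (u l))"
  have "(\<Sum>k=1..D. grover D v k * cnj (u k)) = (\<Sum>k=1..D. c * S * cnj (u k) - v k * cnj (u k))"
    by (intro sum.cong refl) (auto simp: grover_def algebra_simps c_def S_def)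
  also have "\<dots> = (\<Sum>k=1..D. v k * (c * T) - v k * cnj (u k))"
    unfolding S_def T_def
    by (simp add: sum_subtractf sum_distrib_left sum_distrib_right mult_ac) (rule sum.swap)
  also have "\<dots> = (\<Sum>k=1..D. v k * cnj (grover D u k))"
    by (intro sum.cong refl) (auto simp: grover_def algebra_simps c_def T_def)
  finally show ?thesis .
qed

lemma summable_on_mult_cnj_grover:
  assumes a: "a \<in> l2space d"
    and b: "(\<lambda>y. \<Sum>l\<in>coin_index d. (cmod (b y l))\<^sup>2) summable_on Zd d"
  shows "(\<lambda>y. a y k * cnj (grover (2*d+1) (b y) k)) summable_on Zd d"
proof -
  define A where "A y = (\<Sum>l\<in>coin_index d. (cmod (a y l))\<^sup>2)" for y
  define B where "B y = (\<Sum>l\<in>coin_index d. (cmod (b y l))\<^sup>2)" for y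
  define N where "N = real (card (coin_index d))"
  have A_k: "(cmod (a y k))\<^sup>2 \<le> A y" for y
    using l2spaceD(2)[OF a, of k y] unfolding A_def
    by (cases "k \<in> coin_index d") (auto intro: member_le_sum sum_nonneg)
  have "(\<lambda>y. 3/2 * (N * A y + B y)) summable_on Zd d"
    unfolding A_def B_def by (intro summable_on_cmult_right summable_on_add l2spaceD(3)[OF a] b)
  then have "(\<lambda>y. norm (a y k * cnj (grover (2*d+1) (b y) k))) summable_on Zd d"
  proof (rule summable_on_comparison_test)
    fix y
    have "norm (a y k * cnj (grover (2*d+1) (b y) k)) \<le>
        cmod (a y k) * (3 * (\<Sum>l\<in>coin_index d. cmod (b y l)))"
      unfolding norm_mult complex_mod_cnj coin_index_def by (intro mult_left_mono norm_grover_le) auto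
    also have "\<dots> = 3 * (\<Sum>l\<in>coin_index d. cmod (a y k) * cmod (b y l))"
      by (simp add: sum_distrib_left mult_ac)
    also have "\<dots> \<le> 3 * (\<Sum>l\<in>coin_index d. ((cmod (a y k))\<^sup>2 + (cmod (b y l))\<^sup>2) / 2)"
      using weighted_amgm[where t=1] by (intro mult_left_mono sum_mono) auto
    also have "\<dots> = 3/2 * (N * (cmod (a y k))\<^sup>2 + B y)"
      unfolding B_def N_def by (simp add: sum.distrib sum_divide_distrib[symmetric] algebra_simps)
    also have "\<dots> \<le> 3/2 * (N * A y + B y)"
      using A_k[of y] by (intro mult_left_mono add_right_mono) (auto simp: N_def)
    finally show "norm (a y k * cnj (grover (2*d+1) (b y) k)) \<le> 3/2 * (N * A y + B y)" .
  qed auto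
  then show ?thesis by (simp add: summable_on_iff_abs_summable_on_complex)
qed

lemma l2inner_U_adjoint:
  assumes r: "r \<in> l2space d" and e: "e \<in> l2space d"
  shows "l2inner d (U_adjoint d r) e = l2inner d r (U_lazy d e)"
proof -
  define s where "s l = shift_lazy d l" for l
  have s: "s l \<in> Zd d" for l unfolding s_def by (rule shift_lazy_in_Zd)
  have bij: "bij_betw (\<lambda>x. \<lambda>i. x i + s k i) (Zd d) (Zd d)" for k
    by (rule bij_betw_Zd_translate[OF s])
  define F where "F k y = r y k * cnj (grover (2*d+1) (e (\<lambda>i. y i - s k i)) k)" for k y
  have F_translate: "(\<lambda>x. F k (\<lambda>i. x i + s k i)) =
      (\<lambda>x. r (\<lambda>i. x i + s k i) k * cnj (grover (2*d+1) (e x) k))" for k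
    unfolding F_def by auto
  have "(\<lambda>y. \<Sum>l\<in>coin_index d. (cmod (e (\<lambda>i. y i - s k i) l))\<^sup>2) summable_on Zd d" for k
  proof -
    have "bij_betw (\<lambda>y. \<lambda>i. y i - s k i) (Zd d) (Zd d)"
      using bij_betw_Zd_translate[OF Zd_uminus[OF s]] by simp
    from summable_on_reindex_bij_betw[OF this, of "\<lambda>y. \<Sum>l\<in>coin_index d. (cmod (e y l))\<^sup>2"]
    show ?thesis using l2spaceD(3)[OF e] by simp
  qed
  then have F: "F k summable_on Zd d" for k
    unfolding F_def by (rule summable_on_mult_cnj_grover[OF r])
  then have F': "(\<lambda>x. r (\<lambda>i. x i + s k i) k * cnj (grover (2*d+1) (e x) k)) summable_on Zd d" for k
    using summable_on_reindex_bij_betw[OF bij[of k], of "F k"] unfolding F_translate by simp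
  have "l2inner d (U_adjoint d r) e = infsum (\<lambda>x. \<Sum>k\<in>coin_index d.
      grover (2*d+1) (\<lambda>l. r (\<lambda>i. x i + s l i) l) k * cnj (e x k)) (Zd d)"
    unfolding l2inner_eq by (intro infsum_cong) (simp add: U_adjoint_def s_def)
  also have "\<dots> = infsum (\<lambda>x. \<Sum>k\<in>coin_index d. r (\<lambda>i. x i + s k i) k * cnj (grover (2*d+1) (e x) k)) (Zd d)"
    unfolding coin_index_def by (simp only: grover_self_adjoint)
  also have "\<dots> = (\<Sum>k\<in>coin_index d.
      infsum (\<lambda>x. r (\<lambda>i. x i + s k i) k * cnj (grover (2*d+1) (e x) k)) (Zd d))"
    by (intro infsum_sum F') simp
  also have "\<dots> = (\<Sum>k\<in>coin_index d. infsum (F k) (Zd d))"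
    by (intro sum.cong refl) (simp only: F_translate[symmetric] infsum_reindex_bij_betw[OF bij])
  also have "\<dots> = infsum (\<lambda>y. \<Sum>k\<in>coin_index d. F k y) (Zd d)"
    by (intro infsum_sum[symmetric] F) simp
  also have "\<dots> = l2inner d r (U_lazy d e)"
    unfolding l2inner_eq F_def U_lazy_def s_def ..
  finally show ?thesis .
qed

section \<open>The fixed vector \<open>w\<^sub>o\<close> of the symbol\<close>

text \<open>On the torus \<open>cnj z\<^sub>j = z\<^sub>j\<^sup>-\<^sup>1\<close>, so \<open>shift_symbol d z k = z\<^sup>\<alpha>\<close> for the shift \<open>\<alpha>\<close> of coordinate \<open>k\<close>.\<close>
definition shift_symbol :: "nat \<Rightarrow> (nat \<Rightarrow> complex) \<Rightarrow> nat \<Rightarrow> complex" where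
  "shift_symbol d z k =
    (if k \<in> {1..d} then z k else if k \<in> {d+2..2*d+1} then cnj (z (k - (d+1))) else 1)"

definition wo_unnorm :: "nat \<Rightarrow> (nat \<Rightarrow> complex) \<Rightarrow> nat \<Rightarrow> complex" where
  "wo_unnorm d z k = (if k = d+1 then 1/2 else if k \<in> {1..d} then z k / (1 + z k)
      else if k \<in> {d+2..2*d+1} then 1 / (1 + z (k - (d+1))) else 0)"

lemma wo_eq_wo_unnorm:
  "\<not> (\<exists>j\<in>{1..d}. z j = -1) \<Longrightarrow> wo d z k = (1 / complex_of_real (Dz d z)) * wo_unnorm d z k"
  unfolding wo_def wo_unnorm_def by simp

lemma wo_degenerate: "(\<exists>j\<in>{1..d}. z j = -1) \<Longrightarrow> wo d z k = 0"
  unfolding wo_def by simp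

lemma wo_unnorm_outside: "k \<notin> coin_index d \<Longrightarrow> wo_unnorm d z k = 0"
  unfolding wo_unnorm_def coin_index_def by auto

lemma wo_outside: "k \<notin> coin_index d \<Longrightarrow> wo d z k = 0"
  by (cases "\<exists>j\<in>{1..d}. z j = -1") (simp_all add: wo_degenerate wo_eq_wo_unnorm wo_unnorm_outside)

lemma coin_index_cases:
  assumes "k \<in> coin_index d"
  obtains (left) "k \<in> {1..d}" | (stay) "k = d+1" | (right) j where "j \<in> {1..d}" "k = d+1+j"
proof -
  consider "k \<in> {1..d}" | "k = d+1" | "k \<in> {d+2..2*d+1}"
    using assms unfolding coin_index_def by force
  then show ?thesis
  proof cases
    case 3
    then have "k - (d+1) \<in> {1..d}" "k = d+1+(k - (d+1))" by auto
    then show ?thesis by (rule right)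
  qed (use left stay in auto)
qed

lemma sum_coin_index_split:
  "(\<Sum>k\<in>coin_index d. f k) = (\<Sum>j=1..d. f j) + f (d+1) + (\<Sum>j=1..d. f (d+1+j))"
proof -
  have "coin_index d = {1..d} \<union> {d+1} \<union> (\<lambda>j. d+1+j) ` {1..d}"
  proof (intro equalityI subsetI)
    fix k assume "k \<in> coin_index d"
    then show "k \<in> {1..d} \<union> {d+1} \<union> (\<lambda>j. d+1+j) ` {1..d}"
      by (cases rule: coin_index_cases) auto
  qed (auto simp: coin_index_def)
  then have "sum f (coin_index d) = sum f ({1..d} \<union> {d+1}) + sum f ((\<lambda>j. d+1+j) ` {1..d})"
    by (simp only:) (rule sum.union_disjoint, auto)
  also have "sum f ({1..d} \<union> {d+1}) = sum f {1..d} + f (d+1)"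
    by (subst sum.union_disjoint) auto
  also have "sum f ((\<lambda>j. d+1+j) ` {1..d}) = (\<Sum>j=1..d. f (d+1+j))"
    by (simp add: sum.reindex inj_on_def)
  finally show ?thesis .
qed

lemma shift_symbol_simps:
  "j \<in> {1..d} \<Longrightarrow> shift_symbol d z j = z j"
  "shift_symbol d z (d+1) = 1" "shift_symbol d z (Suc d) = 1"
  "j \<in> {1..d} \<Longrightarrow> shift_symbol d z (d+1+j) = cnj (z j)"
  "j \<in> {1..d} \<Longrightarrow> shift_symbol d z (Suc (d+j)) = cnj (z j)"
  unfolding shift_symbol_def by auto

lemma wo_unnorm_simps:
  "j \<in> {1..d} \<Longrightarrow> wo_unnorm d z j = z j / (1 + z j)"
  "wo_unnorm d z (d+1) = 1/2" "wo_unnorm d z (Suc d) = 1/2"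
  "j \<in> {1..d} \<Longrightarrow> wo_unnorm d z (d+1+j) = 1 / (1 + z j)"
  "j \<in> {1..d} \<Longrightarrow> wo_unnorm d z (Suc (d+j)) = 1 / (1 + z j)"
  unfolding wo_unnorm_def by auto

lemma one_plus_neq_0: "z \<noteq> -1 \<Longrightarrow> 1 + z \<noteq> (0::complex)"
  by (metis add.commute add_eq_0_iff)

lemma sum_wo_unnorm:
  assumes "\<And>j. j \<in> {1..d} \<Longrightarrow> z j \<noteq> -1"
  shows "(\<Sum>k\<in>coin_index d. wo_unnorm d z k) = of_nat d + 1/2"
proof -
  have "(\<Sum>k\<in>coin_index d. wo_unnorm d z k) = (\<Sum>j=1..d. z j / (1 + z j) + 1 / (1 + z j)) + 1/2"
    unfolding sum_coin_index_split by (simp add: wo_unnorm_simps sum.distrib)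
  also have "(\<Sum>j=1..d. z j / (1 + z j) + 1 / (1 + z j)) = (\<Sum>j=1..d. (1::complex))"
  proof (rule sum.cong[OF refl])
    fix j assume "j \<in> {1..d}"
    then have "1 + z j \<noteq> 0" using assms one_plus_neq_0 by blast
    then show "z j / (1 + z j) + 1 / (1 + z j) = 1" by (simp add: field_simps)
  qed
  finally show ?thesis by simp
qed

lemma Dz_sq: "(Dz d z)\<^sup>2 = 1/4 + 2 * (\<Sum>j=1..d. 1 / (cmod (1 + z j))\<^sup>2)"
  unfolding Dz_def by (simp add: sum_nonneg)

lemma Dz_pos: "0 < Dz d z"
  unfolding Dz_def by (simp add: sum_nonneg add_pos_nonneg)

lemma sum_norm_sq_wo_unnorm:
  assumes "\<And>j. j \<in> {1..d} \<Longrightarrow> cmod (z j) = 1"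
  shows "(\<Sum>k\<in>coin_index d. (cmod (wo_unnorm d z k))\<^sup>2) = (Dz d z)\<^sup>2"
proof -
  have "(\<Sum>k\<in>coin_index d. (cmod (wo_unnorm d z k))\<^sup>2) =
      (\<Sum>j=1..d. (cmod (z j / (1 + z j)))\<^sup>2) + 1/4 + (\<Sum>j=1..d. (cmod (1 / (1 + z j)))\<^sup>2)"
    unfolding sum_coin_index_split by (simp add: wo_unnorm_simps power_divide)
  also have "\<dots> = (Dz d z)\<^sup>2"
    using assms unfolding Dz_sq by (simp add: norm_divide power_divide)
  finally show ?thesis .
qed

lemma sum_norm_sq_wo:
  assumes "\<And>j. j \<in> {1..d} \<Longrightarrow> cmod (z j) = 1" and "\<And>j. j \<in> {1..d} \<Longrightarrow> z j \<noteq> -1"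
  shows "(\<Sum>k\<in>coin_index d. (cmod (wo d z k))\<^sup>2) = 1"
proof -
  have "(\<Sum>k\<in>coin_index d. (cmod (wo d z k))\<^sup>2) =
      (\<Sum>k\<in>coin_index d. (cmod (wo_unnorm d z k))\<^sup>2) / (Dz d z)\<^sup>2"
    using assms(2) Dz_pos[of d z]
    by (simp add: wo_eq_wo_unnorm norm_mult norm_divide power_divide sum_divide_distrib)
  also have "\<dots> = 1" using sum_norm_sq_wo_unnorm[OF assms(1)] Dz_pos[of d z] by simp
  finally show ?thesis .
qed

lemma norm_wo_le_1:
  assumes hz: "\<And>j. j \<in> {1..d} \<Longrightarrow> cmod (z j) = 1"
  shows "cmod (wo d z k) \<le> 1"
proof (cases "(\<exists>j\<in>{1..d}. z j = -1) \<or> k \<notin> coin_index d")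
  case True
  then have "wo d z k = 0" using wo_degenerate wo_outside by blast
  then show ?thesis by simp
next
  case False
  then have "(cmod (wo d z k))\<^sup>2 \<le> (\<Sum>k\<in>coin_index d. (cmod (wo d z k))\<^sup>2)"
    by (intro member_le_sum) auto
  also have "\<dots> = 1\<^sup>2"
    using False sum_norm_sq_wo[OF hz] by auto
  finally show ?thesis by (rule power2_le_imp_le) simp
qed

lemma norm_shift_symbol:
  assumes "\<And>j. j \<in> {1..d} \<Longrightarrow> cmod (z j) = 1"
  shows "cmod (shift_symbol d z k) = 1"
  unfolding shift_symbol_def by (auto intro!: assms)

lemma cnj_mult_eq_1: "cmod w = 1 \<Longrightarrow> cnj w * w = 1"
  by (metis complex_norm_square mult.commute of_real_1 power_one)

lemma one_plus_shift_symbol_neq_0: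
  assumes "\<And>j. j \<in> {1..d} \<Longrightarrow> z j \<noteq> -1" and "k \<in> coin_index d"
  shows "1 + shift_symbol d z k \<noteq> 0"
  using assms(2)
proof (cases rule: coin_index_cases)
  case (right j)
  have "cnj (z j) \<noteq> -1"
    using assms(1)[OF right(1)] by (metis complex_cnj_cnj complex_cnj_minus complex_cnj_one)
  then show ?thesis using right by (simp add: shift_symbol_simps one_plus_neq_0)
qed (use assms(1) in \<open>simp_all add: shift_symbol_simps one_plus_neq_0\<close>)

lemma inverse_one_plus_shift_symbol:
  assumes hz: "\<And>j. j \<in> {1..d} \<Longrightarrow> cmod (z j) = 1"
    and nd: "\<And>j. j \<in> {1..d} \<Longrightarrow> z j \<noteq> -1" and "k \<in> coin_index d"
  shows "1 / (1 + shift_symbol d z k) = cnj (wo_unnorm d z k)"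
  using assms(3)
proof (cases rule: coin_index_cases)
  case left
  have "z k \<noteq> 0" "1 + z k \<noteq> 0" using hz[OF left] nd[OF left] one_plus_neq_0 by auto
  have "cnj (wo_unnorm d z k) = cnj (z k) / (1 + cnj (z k))"
    using left by (simp add: wo_unnorm_simps)
  also have "\<dots> = (1 / z k) / (1 + 1 / z k)"
    using divide_conv_cnj[OF hz[OF left], of 1] by simp
  also have "\<dots> = 1 / (1 + z k)"
    using \<open>z k \<noteq> 0\<close> \<open>1 + z k \<noteq> 0\<close> by (simp add: field_simps)
  finally show ?thesis using left by (simp add: shift_symbol_simps)
qed (simp_all add: shift_symbol_simps wo_unnorm_simps)

text \<open>The entries sum to \<open>(2d + 1)/2\<close>, which cancels the factor \<open>2/(2d + 1)\<close> of the coin.\<close>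
lemma grover_wo_unnorm:
  assumes "\<And>j. j \<in> {1..d} \<Longrightarrow> z j \<noteq> -1" and "k \<in> coin_index d"
  shows "grover (2*d+1) (wo_unnorm d z) k = 1 - wo_unnorm d z k"
proof -
  have "(2::complex) * (of_nat d + 1/2) = of_nat (2*d+1)" by simp
  moreover have "(of_nat (2*d+1) :: complex) \<noteq> 0" by (simp only: of_nat_eq_0_iff)
  ultimately have "(2 / of_nat (2*d+1)) * (of_nat d + 1/2) = (1::complex)"
    by (metis times_divide_eq_left divide_self mult.commute)
  then show ?thesis
    using assms sum_wo_unnorm[OF assms(1)] by (simp add: grover_def coin_index_def)
qed

lemma shift_symbol_grover_wo_unnorm:
  assumes hz: "\<And>j. j \<in> {1..d} \<Longrightarrow> cmod (z j) = 1"
    and nd: "\<And>j. j \<in> {1..d} \<Longrightarrow> z j \<noteq> -1"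
  shows "shift_symbol d z k * grover (2*d+1) (wo_unnorm d z) k = wo_unnorm d z k"
proof (cases "k \<in> coin_index d")
  case True
  have grover: "grover (2*d+1) (wo_unnorm d z) k = 1 - wo_unnorm d z k"
    by (rule grover_wo_unnorm) (use nd True in auto)
  from True show ?thesis
  proof (cases rule: coin_index_cases)
    case left
    then have "1 + z k \<noteq> 0" using nd one_plus_neq_0 by blast
    with left show ?thesis
      unfolding grover by (simp add: shift_symbol_simps wo_unnorm_simps field_simps)
  next
    case stay
    then show ?thesis unfolding grover by (simp add: shift_symbol_simps wo_unnorm_simps)
  next
    case (right j)
    then have "1 + z j \<noteq> 0" using nd one_plus_neq_0 by blast
    moreover have "cnj (z j) * z j = 1"
      using hz[OF right(1)] by (rule cnj_mult_eq_1)
    ultimately show ?thesis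
      using right unfolding grover by (simp add: shift_symbol_simps wo_unnorm_simps field_simps)
  qed
next
  case False
  then have "grover (2*d+1) (wo_unnorm d z) k = 0"
    unfolding grover_def coin_index_def by auto
  with False show ?thesis by (simp add: wo_unnorm_outside)
qed

lemma shift_symbol_grover_wo:
  assumes hz: "\<And>j. j \<in> {1..d} \<Longrightarrow> cmod (z j) = 1"
  shows "shift_symbol d z k * grover (2*d+1) (wo d z) k = wo d z k"
proof (cases "\<exists>j\<in>{1..d}. z j = -1")
  case True
  then have "wo d z = (\<lambda>l. 0)" by (simp add: wo_degenerate fun_eq_iff)
  with True show ?thesis by (simp add: grover_zero wo_degenerate)
next
  case False
  then have "shift_symbol d z k * grover (2*d+1) (wo_unnorm d z) k = wo_unnorm d z k"
    by (intro shift_symbol_grover_wo_unnorm) (use hz in auto)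
  moreover have wo: "wo d z = (\<lambda>l. (1 / complex_of_real (Dz d z)) * wo_unnorm d z l)"
    using wo_eq_wo_unnorm[OF False] by blast
  ultimately show ?thesis unfolding wo grover_cmult by (simp add: mult.left_commute)
qed

lemma sum_residual_div_one_plus_shift_symbol:
  assumes hz: "\<And>j. j \<in> {1..d} \<Longrightarrow> cmod (z j) = 1"
    and nd: "\<And>j. j \<in> {1..d} \<Longrightarrow> z j \<noteq> -1"
  shows "(\<Sum>k\<in>coin_index d.
    (\<phi> k - cinner_fin (2*d+1) \<phi> (wo d z) * wo d z k) / (1 + shift_symbol d z k)) = 0"
proof -
  define c where "c = cinner_fin (2*d+1) \<phi> (wo d z)"
  define D where "D = complex_of_real (Dz d z)"
  have "D \<noteq> 0" unfolding D_def using Dz_pos[of d z] by simp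
  have inverse: "1 / (1 + shift_symbol d z k) = D * cnj (wo d z k)" if "k \<in> coin_index d" for k
    using inverse_one_plus_shift_symbol[OF hz nd that] nd \<open>D \<noteq> 0\<close>
    by (simp add: wo_eq_wo_unnorm D_def)
  have c: "c = (\<Sum>k\<in>coin_index d. \<phi> k * cnj (wo d z k))"
    unfolding c_def cinner_fin_def coin_index_def ..
  have unit: "(\<Sum>k\<in>coin_index d. wo d z k * cnj (wo d z k)) = 1"
    using sum_norm_sq_wo[OF hz nd]
    by (simp only: complex_norm_square[symmetric] of_real_sum[symmetric]) simp
  have "(\<Sum>k\<in>coin_index d. (\<phi> k - c * wo d z k) / (1 + shift_symbol d z k)) =
      (\<Sum>k\<in>coin_index d. (\<phi> k - c * wo d z k) * (D * cnj (wo d z k)))"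
    by (intro sum.cong refl) (metis inverse times_divide_eq_right mult_1_right)
  also have "\<dots> = D * (c - c * (\<Sum>k\<in>coin_index d. wo d z k * cnj (wo d z k)))"
    unfolding c by (simp add: algebra_simps sum_subtractf sum_distrib_left)
  finally show ?thesis unfolding unit c_def by simp
qed

text \<open>If \<open>\<Sum>\<^sub>k u\<^sub>k / (1 + a\<^sub>k) = 0\<close> for unimodular \<open>a\<^sub>k \<noteq> -1\<close>, then \<open>r\<^sub>k = -a\<^sub>k u\<^sub>k / (1 + a\<^sub>k)\<close>
  solves \<open>G (diag(cnj a) r) - r = u\<close>: the Grover mean of \<open>diag(cnj a) r\<close> vanishes.\<close>
lemma grover_adjoint_preimage:
  assumes hz: "\<And>j. j \<in> {1..d} \<Longrightarrow> cmod (z j) = 1" and nd: "\<And>j. j \<in> {1..d} \<Longrightarrow> z j \<noteq> -1"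
    and u_outside: "\<And>k. k \<notin> coin_index d \<Longrightarrow> u k = 0"
    and u_sum: "(\<Sum>k\<in>coin_index d. u k / (1 + shift_symbol d z k)) = 0"
  shows "grover (2*d+1) (\<lambda>l. cnj (shift_symbol d z l) * (- shift_symbol d z l * u l / (1 + shift_symbol d z l))) k
          - (- shift_symbol d z k * u k / (1 + shift_symbol d z k)) = u k"
proof -
  have "cnj (shift_symbol d z l) * shift_symbol d z l = 1" for l
    by (rule cnj_mult_eq_1[OF norm_shift_symbol[where d=d and z=z, OF hz]])
  then have diag: "cnj (shift_symbol d z l) * (- shift_symbol d z l * u l / (1 + shift_symbol d z l)) =
      - (u l / (1 + shift_symbol d z l))" for l
    by (metis minus_divide_left mult.assoc mult_1 mult_minus_left mult_minus_right times_divide_eq_right)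
  show ?thesis
  proof (cases "k \<in> coin_index d")
    case True
    have "(\<Sum>l=1..2*d+1. - (u l / (1 + shift_symbol d z l))) = 0"
      using u_sum by (simp add: sum_negf coin_index_def)
    then have "grover (2*d+1) (\<lambda>l. cnj (shift_symbol d z l) *
        (- shift_symbol d z l * u l / (1 + shift_symbol d z l))) k = u k / (1 + shift_symbol d z k)"
      using True unfolding diag by (simp add: grover_def coin_index_def)
    moreover have "1 + shift_symbol d z k \<noteq> 0" by (rule one_plus_shift_symbol_neq_0[OF nd True])
    ultimately show ?thesis by (simp add: field_simps)
  next
    case False
    then show ?thesis using u_outside[OF False] unfolding grover_def coin_index_def by auto
  qed
qed

section \<open>The projection and the residual\<close>

lemma torus_point_apply: "j \<in> {1..d} \<Longrightarrow> torus_point d \<theta> j = cis (\<theta> j)"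
  unfolding torus_point_def by simp

lemma norm_torus_point: "j \<in> {1..d} \<Longrightarrow> cmod (torus_point d \<theta> j) = 1"
  by (simp add: torus_point_apply)

lemma borel_measurable_torus_point_component[measurable]:
  "(\<lambda>\<theta>. torus_point d \<theta> j) \<in> borel_measurable (torus_measure d)"
proof (cases "j \<in> {1..d}")
  case False
  then have "(\<lambda>\<theta>. torus_point d \<theta> j) = (\<lambda>\<theta>. undefined)" unfolding torus_point_def by auto
  then show ?thesis by simp
qed (simp add: torus_point_apply)

lemma borel_measurable_wo_torus_point[measurable]:
  "(\<lambda>\<theta>. wo d (torus_point d \<theta>) k) \<in> borel_measurable (torus_measure d)"
  unfolding wo_def Dz_def by measurable

lemma borel_measurable_shift_symbol_torus_point[measurable]:
  "(\<lambda>\<theta>. shift_symbol d (torus_point d \<theta>) k) \<in> borel_measurable (torus_measure d)"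
  unfolding shift_symbol_def by measurable

lemma character_unitv: "j \<in> {1..d} \<Longrightarrow> character d (unitv j) \<theta> = cis (\<theta> j)"
proof -
  assume "j \<in> {1..d}"
  moreover have "(\<Sum>i=1..d. of_int (unitv j i) * \<theta> i) = (\<Sum>i\<in>{1..d}. if i = j then \<theta> i else 0)"
    by (intro sum.cong refl) (simp add: unitv_def)
  ultimately show ?thesis unfolding character_def by simp
qed

lemma character_shift_lazy: "character d (shift_lazy d k) \<theta> = shift_symbol d (torus_point d \<theta>) k"
proof -
  consider "k \<in> {1..d}" | "k \<in> {d+2..2*d+1}" | "k \<notin> {1..d}" "k \<notin> {d+2..2*d+1}" by blast
  then show ?thesis
  proof cases
    case 1
    then show ?thesis
      by (simp add: shift_lazy_def shift_symbol_def torus_point_apply character_unitv)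
  next
    case 2
    then have "k - (d+1) \<in> {1..d}" "k \<notin> {1..d}" by auto
    with 2 show ?thesis
      by (simp add: shift_lazy_def shift_symbol_def torus_point_apply character_unitv
          cnj_character[symmetric])
  next
    case 3
    then have "shift_lazy d k = (\<lambda>_. 0)" "shift_symbol d (torus_point d \<theta>) k = 1"
      unfolding shift_lazy_def shift_symbol_def by (simp_all only: if_not_P if_False)
    then show ?thesis by (simp add: character_def)
  qed
qed

lemma character_uminus_shift_lazy:
  "character d (\<lambda>i. - shift_lazy d k i) \<theta> = cnj (shift_symbol d (torus_point d \<theta>) k)"
  by (simp add: cnj_character[symmetric] character_shift_lazy)

definition proj_symbol :: "nat \<Rightarrow> (nat \<Rightarrow> complex) \<Rightarrow> (nat \<Rightarrow> real) \<Rightarrow> nat \<Rightarrow> complex" where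
  "proj_symbol d \<phi> \<theta> k = cinner_fin (2*d+1) \<phi> (wo d (torus_point d \<theta>)) * wo d (torus_point d \<theta>) k"

definition residual_symbol :: "nat \<Rightarrow> (nat \<Rightarrow> complex) \<Rightarrow> (nat \<Rightarrow> real) \<Rightarrow> nat \<Rightarrow> complex" where
  "residual_symbol d \<phi> \<theta> k = \<phi> k - proj_symbol d \<phi> \<theta> k"

definition cutoff :: "nat \<Rightarrow> real \<Rightarrow> (nat \<Rightarrow> real) \<Rightarrow> complex" where
  "cutoff d \<delta> \<theta> = (if \<forall>j\<in>{1..d}. \<delta> \<le> cmod (1 + torus_point d \<theta> j) then 1 else 0)"

definition preimage_symbol :: "nat \<Rightarrow> (nat \<Rightarrow> complex) \<Rightarrow> real \<Rightarrow> (nat \<Rightarrow> real) \<Rightarrow> nat \<Rightarrow> complex" where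
  "preimage_symbol d \<phi> \<delta> \<theta> k = cutoff d \<delta> \<theta> *
    (- shift_symbol d (torus_point d \<theta>) k * residual_symbol d \<phi> \<theta> k / (1 + shift_symbol d (torus_point d \<theta>) k))"

lemma borel_measurable_proj_symbol[measurable]:
  "(\<lambda>\<theta>. proj_symbol d \<phi> \<theta> k) \<in> borel_measurable (torus_measure d)"
  unfolding proj_symbol_def cinner_fin_def by measurable

lemma borel_measurable_residual_symbol[measurable]:
  "(\<lambda>\<theta>. residual_symbol d \<phi> \<theta> k) \<in> borel_measurable (torus_measure d)"
  unfolding residual_symbol_def by measurable

lemma borel_measurable_cutoff[measurable]: "cutoff d \<delta> \<in> borel_measurable (torus_measure d)"
  unfolding cutoff_def by measurable

lemma borel_measurable_preimage_symbol[measurable]: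
  "(\<lambda>\<theta>. preimage_symbol d \<phi> \<delta> \<theta> k) \<in> borel_measurable (torus_measure d)"
  unfolding preimage_symbol_def by measurable

lemma bounded_symbol_const:
  assumes "coin_vector d \<phi>"
  shows "bounded_symbol d (\<lambda>\<theta> k. \<phi> k)"
proof (rule bounded_symbolI)
  show "cmod (\<phi> k) \<le> (\<Sum>l\<in>coin_index d. cmod (\<phi> l))" for k
    using assms unfolding coin_vector_def
    by (cases "k \<in> coin_index d") (auto intro: member_le_sum sum_nonneg)
qed (use assms in \<open>auto simp: coin_vector_def\<close>)

lemma bounded_symbol_proj_symbol: "bounded_symbol d (proj_symbol d \<phi>)"
proof (rule bounded_symbolI)
  fix \<theta> k
  have "cmod (cinner_fin (2*d+1) \<phi> (wo d (torus_point d \<theta>))) \<le> (\<Sum>l=1..2*d+1. cmod (\<phi> l))"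
    unfolding cinner_fin_def
  proof (rule order_trans[OF norm_sum], rule sum_mono)
    fix l
    show "cmod (\<phi> l * cnj (wo d (torus_point d \<theta>) l)) \<le> cmod (\<phi> l)"
      unfolding norm_mult complex_mod_cnj
      by (rule mult_left_le[OF norm_wo_le_1[OF norm_torus_point]]) simp_all
  qed
  then show "cmod (proj_symbol d \<phi> \<theta> k) \<le> (\<Sum>l=1..2*d+1. cmod (\<phi> l))"
    unfolding proj_symbol_def norm_mult
    using mult_mono[OF _ norm_wo_le_1, of _ "\<Sum>l=1..2*d+1. cmod (\<phi> l)" d "torus_point d \<theta>" k]
    by (simp add: norm_torus_point sum_nonneg)
qed (measurable, simp add: proj_symbol_def wo_outside)

lemma bounded_symbol_residual_symbol:
  assumes "coin_vector d \<phi>"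
  shows "bounded_symbol d (residual_symbol d \<phi>)"
  unfolding residual_symbol_def[abs_def]
  by (rule bounded_symbol_diff[OF bounded_symbol_const[OF assms] bounded_symbol_proj_symbol])

lemma U_symbol_proj_symbol: "U_symbol d (proj_symbol d \<phi>) = proj_symbol d \<phi>"
proof (intro ext)
  fix \<theta> k
  let ?z = "torus_point d \<theta>"
  have "U_symbol d (proj_symbol d \<phi>) \<theta> k =
      cinner_fin (2*d+1) \<phi> (wo d ?z) * (shift_symbol d ?z k * grover (2*d+1) (wo d ?z) k)"
    unfolding U_symbol_def proj_symbol_def grover_cmult character_shift_lazy by (simp add: mult_ac)
  also have "shift_symbol d ?z k * grover (2*d+1) (wo d ?z) k = wo d ?z k"
    by (rule shift_symbol_grover_wo) (rule norm_torus_point)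
  finally show "U_symbol d (proj_symbol d \<phi>) \<theta> k = proj_symbol d \<phi> \<theta> k"
    unfolding proj_symbol_def .
qed

lemma cutoff_cases: "cutoff d \<delta> \<theta> = 0 \<or> cutoff d \<delta> \<theta> = 1"
  unfolding cutoff_def by auto

lemma norm_cutoff_le_1: "cmod (cutoff d \<delta> \<theta>) \<le> 1"
  unfolding cutoff_def by auto

lemma cutoff_neq_0_iff:
  "cutoff d \<delta> \<theta> \<noteq> 0 \<longleftrightarrow> (\<forall>j\<in>{1..d}. \<delta> \<le> cmod (1 + torus_point d \<theta> j))"
  unfolding cutoff_def by auto

lemma cutoff_neq_0_le_norm_one_plus_shift_symbol:
  assumes "cutoff d \<delta> \<theta> \<noteq> 0" "\<delta> \<le> 1" "k \<in> coin_index d"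
  shows "\<delta> \<le> cmod (1 + shift_symbol d (torus_point d \<theta>) k)"
  using assms(3)
proof (cases rule: coin_index_cases)
  case (right j)
  have "cmod (1 + cnj (torus_point d \<theta> j)) = cmod (1 + torus_point d \<theta> j)"
    by (metis complex_cnj_add complex_cnj_one complex_mod_cnj)
  with right assms(1) show ?thesis by (simp add: shift_symbol_simps cutoff_neq_0_iff)
qed (use assms in \<open>simp_all add: shift_symbol_simps cutoff_neq_0_iff\<close>)

lemma bounded_symbol_preimage_symbol:
  assumes \<phi>: "coin_vector d \<phi>" and \<delta>: "0 < \<delta>" "\<delta> \<le> 1"
  shows "bounded_symbol d (preimage_symbol d \<phi> \<delta>)"
proof -
  obtain B where B: "\<And>\<theta> k. cmod (residual_symbol d \<phi> \<theta> k) \<le> B"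
    using bounded_symbolD(2)[OF bounded_symbol_residual_symbol[OF \<phi>]] by blast
  show ?thesis
  proof (rule bounded_symbolI)
    fix \<theta> k
    let ?a = "shift_symbol d (torus_point d \<theta>) k"
    have "0 \<le> B" using B[of \<theta> k] by (meson norm_ge_zero order_trans)
    show "cmod (preimage_symbol d \<phi> \<delta> \<theta> k) \<le> B / \<delta>"
    proof (cases "cutoff d \<delta> \<theta> = 0 \<or> k \<notin> coin_index d")
      case True
      with \<open>0 \<le> B\<close> show ?thesis
        using \<delta> bounded_symbolD(3)[OF bounded_symbol_residual_symbol[OF \<phi>]]
        by (auto simp: preimage_symbol_def)
    next
      case False
      then have "cutoff d \<delta> \<theta> = 1" "\<delta> \<le> cmod (1 + ?a)"
        using cutoff_cases \<delta> by (auto intro: cutoff_neq_0_le_norm_one_plus_shift_symbol)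
      moreover have "cmod ?a = 1" by (intro norm_shift_symbol norm_torus_point)
      ultimately show ?thesis
        using \<delta> B[of \<theta> k] \<open>0 \<le> B\<close>
        by (auto simp: preimage_symbol_def norm_mult norm_divide intro!: frac_le)
    qed
  qed (use bounded_symbolD(3)[OF bounded_symbol_residual_symbol[OF \<phi>]] in \<open>simp_all add: preimage_symbol_def\<close>)
qed

text \<open>Where the cutoff is active, \<open>y(z) \<perp> w\<^sub>o(z)\<close> is exactly the orthogonality condition of
  \<open>grover_adjoint_preimage\<close>, because \<open>1 / (1 + a\<^sub>k(z))\<close> is proportional to \<open>cnj (w\<^sub>o(z)\<^sub>k)\<close>.\<close>
lemma U_adjoint_symbol_preimage_symbol:
  assumes \<phi>: "coin_vector d \<phi>" and \<delta>: "0 < \<delta>"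
  shows "U_adjoint_symbol d (preimage_symbol d \<phi> \<delta>) \<theta> k - preimage_symbol d \<phi> \<delta> \<theta> k =
    cutoff d \<delta> \<theta> * residual_symbol d \<phi> \<theta> k"
proof (cases "cutoff d \<delta> \<theta> = 0")
  case True
  then have "preimage_symbol d \<phi> \<delta> \<theta> = (\<lambda>l. 0)" unfolding preimage_symbol_def by auto
  with True show ?thesis by (simp add: U_adjoint_symbol_def grover_zero)
next
  case False
  then have cutoff: "cutoff d \<delta> \<theta> = 1" using cutoff_cases by auto
  define z where "z = torus_point d \<theta>"
  have hz: "\<And>j. j \<in> {1..d} \<Longrightarrow> cmod (z j) = 1"
    unfolding z_def by (rule norm_torus_point)
  have nd: "\<And>j. j \<in> {1..d} \<Longrightarrow> z j \<noteq> -1"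
    using False \<delta> unfolding z_def cutoff_neq_0_iff by fastforce
  have "(\<Sum>k\<in>coin_index d. residual_symbol d \<phi> \<theta> k / (1 + shift_symbol d z k)) = 0"
    unfolding residual_symbol_def proj_symbol_def z_def[symmetric]
    by (rule sum_residual_div_one_plus_shift_symbol[OF hz nd])
  from grover_adjoint_preimage[OF hz nd bounded_symbolD(3)[OF bounded_symbol_residual_symbol[OF \<phi>]] this]
  show ?thesis
    unfolding U_adjoint_symbol_def preimage_symbol_def cutoff character_uminus_shift_lazy z_def
    by simp
qed

lemma l2inner_fourier_coeffs_cutoff_residual:
  assumes \<phi>: "coin_vector d \<phi>" and \<delta>: "0 < \<delta>" "\<delta> \<le> 1"
    and e: "e \<in> eigenspace1 d"
  shows "l2inner d (fourier_coeffs d (\<lambda>\<theta> k. cutoff d \<delta> \<theta> * residual_symbol d \<phi> \<theta> k)) e = 0"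
proof -
  have e_l2: "e \<in> l2space d" and Ue: "U_lazy d e = e" using e unfolding eigenspace1_def by auto
  define r where "r = preimage_symbol d \<phi> \<delta>"
  define R where "R = fourier_coeffs d r"
  have r: "bounded_symbol d r" unfolding r_def by (rule bounded_symbol_preimage_symbol[OF \<phi> \<delta>])
  have Ur: "U_adjoint_symbol d r = (\<lambda>\<theta> k. cutoff d \<delta> \<theta> * residual_symbol d \<phi> \<theta> k + r \<theta> k)"
    using U_adjoint_symbol_preimage_symbol[OF \<phi> \<delta>(1)] unfolding r_def
    by (intro ext) (simp add: algebra_simps)
  then have symbol: "(\<lambda>\<theta> k. cutoff d \<delta> \<theta> * residual_symbol d \<phi> \<theta> k) =
      (\<lambda>\<theta> k. U_adjoint_symbol d r \<theta> k - r \<theta> k)"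
    by simp
  have "bounded_symbol d (U_adjoint_symbol d r)"
    unfolding Ur
    by (rule bounded_symbol_add[OF bounded_symbol_mult[OF bounded_symbol_residual_symbol[OF \<phi>]
          borel_measurable_cutoff norm_cutoff_le_1] r])
  then have "fourier_coeffs d (\<lambda>\<theta> k. cutoff d \<delta> \<theta> * residual_symbol d \<phi> \<theta> k) =
      (\<lambda>x k. U_adjoint d R x k - R x k)"
    unfolding symbol R_def by (simp add: fourier_coeffs_diff r U_adjoint_fourier_coeffs)
  moreover have "U_adjoint d R \<in> l2space d"
    unfolding R_def U_adjoint_fourier_coeffs[OF r]
    by (rule fourier_coeffs_in_l2space) fact
  moreover have "R \<in> l2space d" unfolding R_def by (rule fourier_coeffs_in_l2space[OF r])
  ultimately show ?thesis
    using e_l2 by (simp add: l2inner_diff_left l2inner_U_adjoint Ue)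
qed

lemma cis_neq_minus_1:
  assumes "t \<in> {0..2*pi}" "t \<noteq> pi"
  shows "cis t \<noteq> -1"
proof
  assume "cis t = -1"
  then have "Re (cis t) = Re (-1)" by simp
  then have "cos t = -1" by simp
  then obtain n :: int where n: "t = (2*n+1) * pi" by (auto simp: cos_eq_minus1)
  then have q: "real_of_int (2*n+1) = t / pi" by simp
  have "0 \<le> t / pi" "t / pi \<le> 2" using assms(1) by (simp_all add: divide_le_eq)
  then have "0 \<le> real_of_int (2*n+1)" "real_of_int (2*n+1) \<le> 2" unfolding q by auto
  then have "n = 0" by linarith
  with n assms(2) show False by simp
qed

lemma AE_torus_point_neq_minus_1: "AE \<theta> in torus_measure d. \<forall>j\<in>{1..d}. torus_point d \<theta> j \<noteq> -1"
proof (rule eventually_ball_finite)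
  have circle: "AE t in circle_measure. cis t \<noteq> -1"
    unfolding circle_measure_def
  proof (rule AE_uniform_measureI)
    show "AE t in lborel. t \<in> {0..2*pi} \<longrightarrow> cis t \<noteq> -1"
      using AE_lborel_singleton[of pi] by eventually_elim (metis cis_neq_minus_1)
  qed simp
  show "\<forall>j\<in>{1..d}. AE \<theta> in torus_measure d. torus_point d \<theta> j \<noteq> -1"
  proof
    fix j assume j: "j \<in> {1..d}"
    have "AE \<theta> in torus_measure d. cis (\<theta> j) \<noteq> -1"
      unfolding torus_measure_def by (rule AE_PiM_component[OF prob_space_circle_measure j circle])
    then show "AE \<theta> in torus_measure d. torus_point d \<theta> j \<noteq> -1"
      by eventually_elim (simp add: torus_point_apply[OF j])
  qed
qed simp

lemma eventually_cutoff_eq_1: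
  assumes "\<forall>j\<in>{1..d}. torus_point d \<theta> j \<noteq> -1"
  shows "eventually (\<lambda>n. cutoff d (inverse (real (Suc n))) \<theta> = 1) sequentially"
proof -
  have "\<forall>j\<in>{1..d}. eventually (\<lambda>n. inverse (real (Suc n)) \<le> cmod (1 + torus_point d \<theta> j)) sequentially"
  proof
    fix j assume "j \<in> {1..d}"
    then have "0 < cmod (1 + torus_point d \<theta> j)" using assms one_plus_neq_0 by auto
    from order_tendstoD(2)[OF LIMSEQ_inverse_real_of_nat this]
    show "eventually (\<lambda>n. inverse (real (Suc n)) \<le> cmod (1 + torus_point d \<theta> j)) sequentially"
      by eventually_elim simp
  qed
  then show ?thesis by (auto simp: cutoff_def eventually_ball_finite_distrib)
qed

lemma integral_residual_outside_cutoff_tendsto_0: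
  assumes \<phi>: "coin_vector d \<phi>"
  shows "(\<lambda>n. integral\<^sup>L (torus_measure d) (\<lambda>\<theta>. \<Sum>k\<in>coin_index d.
      (cmod ((1 - cutoff d (inverse (real (Suc n))) \<theta>) * residual_symbol d \<phi> \<theta> k))\<^sup>2)) \<longlonglongrightarrow> 0"
proof -
  obtain B where B: "\<And>\<theta> k. cmod (residual_symbol d \<phi> \<theta> k) \<le> B"
    using bounded_symbolD(2)[OF bounded_symbol_residual_symbol[OF \<phi>]] by blast
  define s where "s n \<theta> = (\<Sum>k\<in>coin_index d.
      (cmod ((1 - cutoff d (inverse (real (Suc n))) \<theta>) * residual_symbol d \<phi> \<theta> k))\<^sup>2)" for n \<theta>
  have "(\<lambda>n. integral\<^sup>L (torus_measure d) (s n)) \<longlonglongrightarrow> integral\<^sup>L (torus_measure d) (\<lambda>\<theta>. 0::real)"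
  proof (rule integral_dominated_convergence[where w="\<lambda>\<theta>. real (card (coin_index d)) * B\<^sup>2"])
    show "s n \<in> borel_measurable (torus_measure d)" for n
      unfolding s_def by measurable
    show "integrable (torus_measure d) (\<lambda>\<theta>. real (card (coin_index d)) * B\<^sup>2)"
      by (rule integrable_torus_measure_bounded) auto
    show "AE \<theta> in torus_measure d. norm (s n \<theta>) \<le> real (card (coin_index d)) * B\<^sup>2" for n
    proof (intro AE_I2)
      fix \<theta>
      have "cmod (1 - cutoff d (inverse (real (Suc n))) \<theta>) \<le> 1"
        using cutoff_cases[of d "inverse (real (Suc n))" \<theta>] by auto
      then have "cmod ((1 - cutoff d (inverse (real (Suc n))) \<theta>) * residual_symbol d \<phi> \<theta> k) \<le> B" for k
        using mult_mono[OF \<open>cmod (1 - cutoff d (inverse (real (Suc n))) \<theta>) \<le> 1\<close> B[of \<theta> k]]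
        by (simp add: norm_mult)
      then have "(cmod ((1 - cutoff d (inverse (real (Suc n))) \<theta>) * residual_symbol d \<phi> \<theta> k))\<^sup>2 \<le> B\<^sup>2"
        for k
        by (intro power_mono) auto
      then show "norm (s n \<theta>) \<le> real (card (coin_index d)) * B\<^sup>2"
        unfolding s_def using sum_mono[of "coin_index d" _ "\<lambda>_. B\<^sup>2"] by (simp add: sum_nonneg)
    qed
    show "AE \<theta> in torus_measure d. (\<lambda>n. s n \<theta>) \<longlonglongrightarrow> 0"
      using AE_torus_point_neq_minus_1
    proof eventually_elim
      fix \<theta> assume "\<forall>j\<in>{1..d}. torus_point d \<theta> j \<noteq> -1"
      from eventually_cutoff_eq_1[OF this] have "eventually (\<lambda>n. s n \<theta> = 0) sequentially"
        by eventually_elim (simp add: s_def)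
      then show "(\<lambda>n. s n \<theta>) \<longlonglongrightarrow> 0" by (rule tendsto_eventually)
    qed
  qed simp
  then show ?thesis unfolding s_def by simp
qed

lemma l2inner_eq_0_if_l2norm_sq_tendsto_0:
  assumes e: "e \<in> l2space d" and f: "\<And>n. f n \<in> l2space d"
    and L: "\<And>n. l2inner d (f n) e = L" and lim: "(\<lambda>n. l2norm_sq d (f n)) \<longlonglongrightarrow> 0"
  shows "L = 0"
proof -
  have "cmod L \<le> 0"
  proof (rule field_le_epsilon)
    fix \<epsilon> :: real assume \<epsilon>: "0 < \<epsilon>"
    define t where "t = (l2norm_sq d e + 1) / \<epsilon>"
    have e0: "0 \<le> l2norm_sq d e" by (rule l2norm_sq_nonneg)
    then have t: "0 < t" unfolding t_def using \<epsilon> by simp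
    obtain n where n: "l2norm_sq d (f n) < \<epsilon> / t"
      using order_tendstoD(2)[OF lim, of "\<epsilon> / t"] t \<epsilon> by (auto dest: eventually_happens)
    have "cmod L \<le> (t * l2norm_sq d (f n) + l2norm_sq d e / t) / 2"
      using norm_l2inner_le[OF f e t] L by simp
    also have "\<dots> \<le> \<epsilon>"
    proof -
      have "t * l2norm_sq d (f n) \<le> \<epsilon>" using n t by (simp add: less_divide_eq mult.commute)
      moreover have "l2norm_sq d e / t \<le> \<epsilon>" unfolding t_def using \<epsilon> e0 by (simp add: field_simps)
      ultimately show ?thesis by simp
    qed
    finally show "cmod L \<le> 0 + \<epsilon>" by simp
  qed
  then show ?thesis by simp
qed

lemma fourier_coeffs_residual_orthogonal:
  assumes \<phi>: "coin_vector d \<phi>" and e: "e \<in> eigenspace1 d"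
  shows "l2inner d (fourier_coeffs d (residual_symbol d \<phi>)) e = 0"
proof (rule l2inner_eq_0_if_l2norm_sq_tendsto_0)
  define \<delta> where "\<delta> n = inverse (real (Suc n))" for n
  define y where "y = residual_symbol d \<phi>"
  define c where "c n \<theta> k = cutoff d (\<delta> n) \<theta> * y \<theta> k" for n \<theta> k
  define g where "g n \<theta> k = (1 - cutoff d (\<delta> n) \<theta>) * y \<theta> k" for n \<theta> k
  have y: "bounded_symbol d y" unfolding y_def by (rule bounded_symbol_residual_symbol[OF \<phi>])
  have c: "bounded_symbol d (c n)" for n
    unfolding c_def by (rule bounded_symbol_mult[OF y borel_measurable_cutoff norm_cutoff_le_1])
  have g_eq: "g n = (\<lambda>\<theta> k. y \<theta> k - c n \<theta> k)" for n
    unfolding g_def c_def by (auto simp: fun_eq_iff algebra_simps)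
  have g: "bounded_symbol d (g n)" for n unfolding g_eq by (rule bounded_symbol_diff[OF y c])
  show e_l2: "e \<in> l2space d" using e unfolding eigenspace1_def by auto
  show "fourier_coeffs d (g n) \<in> l2space d" for n by (rule fourier_coeffs_in_l2space[OF g])
  show "l2inner d (fourier_coeffs d (g n)) e = l2inner d (fourier_coeffs d (residual_symbol d \<phi>)) e" for n
  proof -
    have "0 < \<delta> n" "\<delta> n \<le> 1" unfolding \<delta>_def by (auto simp: field_simps)
    then have "l2inner d (fourier_coeffs d (c n)) e = 0"
      unfolding c_def y_def by (rule l2inner_fourier_coeffs_cutoff_residual[OF \<phi> _ _ e])
    moreover have "l2inner d (fourier_coeffs d (g n)) e =
        l2inner d (fourier_coeffs d y) e - l2inner d (fourier_coeffs d (c n)) e"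
      unfolding g_eq fourier_coeffs_diff[OF y c]
      by (rule l2inner_diff_left[OF fourier_coeffs_in_l2space[OF y] fourier_coeffs_in_l2space[OF c] e_l2])
    ultimately show ?thesis unfolding y_def by simp
  qed
  have "(\<lambda>n. integral\<^sup>L (torus_measure d) (\<lambda>\<theta>. \<Sum>k\<in>coin_index d. (cmod (g n \<theta> k))\<^sup>2)) \<longlonglongrightarrow> 0"
    unfolding g_def \<delta>_def y_def by (rule integral_residual_outside_cutoff_tendsto_0[OF \<phi>])
  then show "(\<lambda>n. l2norm_sq d (fourier_coeffs d (g n))) \<longlonglongrightarrow> 0"
    by (rule real_tendsto_sandwich[rotated 2, OF tendsto_const])
      (auto intro!: always_eventually l2norm_sq_nonneg l2norm_sq_fourier_coeffs_le[OF g])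
qed

lemma proj_plus_delta0:
  assumes \<phi>: "coin_vector d \<phi>"
  shows "proj_plus d (delta0 \<phi>) = fourier_coeffs d (proj_symbol d \<phi>)"
proof (rule proj_plus_eqI)
  show "delta0 \<phi> \<in> l2space d"
    using fourier_coeffs_in_l2space[OF bounded_symbol_const[OF \<phi>]] by (simp add: fourier_coeffs_const)
  have "U_lazy d (fourier_coeffs d (proj_symbol d \<phi>)) = fourier_coeffs d (proj_symbol d \<phi>)"
    unfolding U_lazy_fourier_coeffs[OF bounded_symbol_proj_symbol] U_symbol_proj_symbol ..
  with fourier_coeffs_in_l2space[OF bounded_symbol_proj_symbol]
  show "fourier_coeffs d (proj_symbol d \<phi>) \<in> eigenspace1 d"
    unfolding eigenspace1_def by simp
  have "(\<lambda>x k. delta0 \<phi> x k - fourier_coeffs d (proj_symbol d \<phi>) x k) =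
      fourier_coeffs d (residual_symbol d \<phi>)"
    unfolding residual_symbol_def[abs_def] fourier_coeffs_const[where d=d, symmetric]
    by (rule fourier_coeffs_diff[OF bounded_symbol_const[OF \<phi>] bounded_symbol_proj_symbol, symmetric])
  then show "l2inner d (\<lambda>x k. delta0 \<phi> x k - fourier_coeffs d (proj_symbol d \<phi>) x k) e = 0"
    if "e \<in> eigenspace1 d" for e
    using fourier_coeffs_residual_orthogonal[OF \<phi> that] by simp
qed

lemma fourier_coeffs_proj_symbol:
  assumes "x \<in> Zd d"
  shows "fourier_coeffs d (proj_symbol d \<phi>) x k =
    (LINT z|haar d. zpow d z (\<lambda>j. - x j) * cinner_fin (2*d+1) \<phi> (wo d z) * wo d z k)"
proof -
  have "(\<lambda>z. zpow d z (\<lambda>j. - x j) * cinner_fin (2*d+1) \<phi> (wo d z) * wo d z k)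
      \<in> borel_measurable (PiM {1..d} (\<lambda>_. borel))"
    unfolding zpow_def power_int_def cinner_fin_def wo_def Dz_def by measurable
  from integral_haar[OF this] show ?thesis
    using assms by (simp add: fourier_coeffs_def proj_symbol_def zpow_torus_point mult.assoc)
qed

theorem mainTheorem4:
  fixes d :: nat and \<phi> :: "nat \<Rightarrow> complex" and x :: "nat \<Rightarrow> int"
  assumes "d \<ge> 1"
    and "\<forall>k. k \<notin> {1..2*d+1} \<longrightarrow> \<phi> k = 0"
    and "x \<in> Zd d"
  shows "proj_plus d (delta0 \<phi>) x =
    (\<lambda>k. LINT z|haar d. zpow d z (\<lambda>j. - x j) * cinner_fin (2*d+1) \<phi> (wo d z) * wo d z k)"
proof -
  \<comment> \<open>The argument works for \<open>d = 0\<close> as well.\<close>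
  have "coin_vector d \<phi>" using assms(2) unfolding coin_vector_def coin_index_def by blast
  then show ?thesis
    using assms(3) by (simp add: proj_plus_delta0 fourier_coeffs_proj_symbol fun_eq_iff)
qed

end
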